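(* Let $\mathbb K$ be a field with $2\in\mathbb K^\times$, $A$ a unital commutative associative $\mathbb K$-algebra, $\mathfrak k$ a $\mathbb K$-Lie algebra and $\mathfrak g=A\otimes\mathfrak k$. Then: (1) $\Lambda^2(A)\otimes\mathfrak k.S^2(\mathfrak k)+T_0(A)\otimes(\mathfrak k\vee\mathfrak k')\subseteq B_2(\mathfrak g)$ and $p_1(B_2(\mathfrak g))=\Lambda^2(A)\otimes\mathfrak k.S^2(\mathfrak k)+T(A)\otimes(\mathfrak k\vee\mathfrak k')$; (2) $p_2(B_2(\mathfrak g))=A\otimes B_2(\mathfrak k)$; (3) $I_A\otimes(\mathfrak k\wedge\mathfrak k')=p_3(B_2(\mathfrak g))\subseteq B_2(\mathfrak g)$.
   Context: $\mathfrak g$ has bracket $[a\otimes x,a'\otimes x']=aa'\otimes[x,x']$, $ax=a\otimes x$, unit $\mathbf 1$, $\mathfrak k'=[\mathfrak k,\mathfrak k]$. $v\wedge w=\tfrac12(v\otimes w-w\otimes v)$, $v\vee w=\tfrac12(v\otimes w+w\otimes v)$. For a Lie algebra $\mathfrak h$, $B_2(\mathfrak h)$ is the image of $\partial:\Lambda^3(\mathfrak h)\to\Lambda^2(\mathfrak h)$, $u\wedge v\wedge w\mapsto[u,v]\wedge w+[v,w]\wedge u+[w,u]\wedge v$. $I_A$ is the kernel of multiplication $S^2(A)\to A$. Subspaces of $\Lambda^2(\mathfrak g)$: $\Lambda^2(A)\otimes S^2(\mathfrak k)$ via $a\wedge b\otimes x\vee y\mapsto\tfrac12(ax\wedge by+ay\wedge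 bx)$, $A\otimes\Lambda^2(\mathfrak k)$ via $a\otimes x\wedge y\mapsto\tfrac12(ax\wedge\mathbf 1y-ay\wedge\mathbf 1x)$, $I_A\otimes\Lambda^2(\mathfrak k)$ via $a\vee b\otimes x\wedge y\mapsto\tfrac12(ax\wedge by-ay\wedge bx)$; $\Lambda^2(\mathfrak g)$ is their direct sum with projections $p_1(ax\wedge by)=a\wedge b\otimes x\vee y$, $p_2(ax\wedge by)=ab\otimes x\wedge y$, $p_3(ax\wedge by)=(a\vee b-ab\vee\mathbf 1)\otimes x\wedge y$. $\mathfrak k.S^2(\mathfrak k)$ is the span of $[z,x]\vee y+x\vee[z,y]$; $\mathfrak k\vee\mathfrak k'$ the span of $x\vee y$, and $\mathfrak k\wedge\mathfrak k'$ the span of $x\wedge y$, with $x\in\mathfrak k$, $y\in\mathfrak k'$. $T(A)$ is the span of $ab\wedge c+bc\wedge a+ca\wedge b$, and $T_0(A)$ the span of $ab\wedge c+bc\wedge a+ca\wedge b-abc\wedge\mathbf 1$ ($a,b,c\in A$). *)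

theory Defs
  imports Complex_Main "HOL-Library.Function_Algebras"
begin

text \<open>A vector space on a type 'v is given by a
scalar multiplication s with Vector_Spaces.vector_space s.  The tensor product V (x) W
is modelled concretely inside the space of functions on pairs of linear functionals:
v (x) w is the bilinear form (phi,psi) mapsto phi v * psi w on V* x W*.  Over a field this
realises V (x) W faithfully (the canonical map V (x) W -> Bil(V*,W*) is injective).\<close>

definition fscale :: "'f::field \<Rightarrow> ('x \<Rightarrow> 'f) \<Rightarrow> ('x \<Rightarrow> 'f)" where
  "fscale c f = (\<lambda>x. c * f x)"

definition fspan :: "('x \<Rightarrow> 'f::field) set \<Rightarrow> ('x \<Rightarrow> 'f) set" where
  "fspan S = module.span fscale S"

type_synonym ('v, 'w, 'f) tens = "('v \<Rightarrow> 'f) \<times> ('w \<Rightarrow> 'f) \<Rightarrow> 'f"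

definition tp :: "('f::field \<Rightarrow> 'v::ab_group_add \<Rightarrow> 'v) \<Rightarrow> ('f \<Rightarrow> 'w::ab_group_add \<Rightarrow> 'w)
    \<Rightarrow> 'v \<Rightarrow> 'w \<Rightarrow> ('v, 'w, 'f) tens" where
  "tp s1 s2 v w = (\<lambda>(\<phi>, \<psi>). if Vector_Spaces.linear s1 (*) \<phi> \<and> Vector_Spaces.linear s2 (*) \<psi>
                               then \<phi> v * \<psi> w else 0)"

definition tsp :: "('f::field \<Rightarrow> 'v::ab_group_add \<Rightarrow> 'v) \<Rightarrow> ('f \<Rightarrow> 'w::ab_group_add \<Rightarrow> 'w)
    \<Rightarrow> 'v set \<Rightarrow> 'w set \<Rightarrow> ('v, 'w, 'f) tens set" where
  "tsp s1 s2 U W = fspan {tp s1 s2 u w | u w. u \<in> U \<and> w \<in> W}"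

definition wedge2 :: "('f::field \<Rightarrow> 'v::ab_group_add \<Rightarrow> 'v) \<Rightarrow> 'v \<Rightarrow> 'v \<Rightarrow> ('v, 'v, 'f) tens" where
  "wedge2 s v w = fscale (1/2) (tp s s v w - tp s s w v)"

definition vee2 :: "('f::field \<Rightarrow> 'v::ab_group_add \<Rightarrow> 'v) \<Rightarrow> 'v \<Rightarrow> 'v \<Rightarrow> ('v, 'v, 'f) tens" where
  "vee2 s v w = fscale (1/2) (tp s s v w + tp s s w v)"

definition Lam2 :: "('f::field \<Rightarrow> 'v::ab_group_add \<Rightarrow> 'v) \<Rightarrow> 'v set \<Rightarrow> ('v, 'v, 'f) tens set" where
  "Lam2 s H = fspan {wedge2 s u v | u v. u \<in> H \<and> v \<in> H}"

definition Sym2 :: "('f::field \<Rightarrow> 'v::ab_group_add \<Rightarrow> 'v) \<Rightarrow> 'v set \<Rightarrow> ('v, 'v, 'f) tens set" where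
  "Sym2 s H = fspan {vee2 s u v | u v. u \<in> H \<and> v \<in> H}"

text \<open>Triple tensors and u wedge v wedge w realised by the (unnormalised) antisymmetriser,
which embeds Lambda^3 into the third tensor power in every characteristic.\<close>
definition tp3 :: "('f::field \<Rightarrow> 'v::ab_group_add \<Rightarrow> 'v) \<Rightarrow> 'v \<Rightarrow> 'v \<Rightarrow> 'v
    \<Rightarrow> (('v, 'v, 'f) tens, 'v, 'f) tens" where
  "tp3 s u v w = tp fscale s (tp s s u v) w"

definition wedge3 :: "('f::field \<Rightarrow> 'v::ab_group_add \<Rightarrow> 'v) \<Rightarrow> 'v \<Rightarrow> 'v \<Rightarrow> 'v
    \<Rightarrow> (('v, 'v, 'f) tens, 'v, 'f) tens" where
  "wedge3 s u v w = tp3 s u v w - tp3 s v u w + tp3 s v w u - tp3 s w v u + tp3 s w u v - tp3 s u w v"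

definition Lam3 :: "('f::field \<Rightarrow> 'v::ab_group_add \<Rightarrow> 'v) \<Rightarrow> 'v set
    \<Rightarrow> (('v, 'v, 'f) tens, 'v, 'f) tens set" where
  "Lam3 s H = fspan {wedge3 s u v w | u v w. u \<in> H \<and> v \<in> H \<and> w \<in> H}"

definition bdry :: "('f::field \<Rightarrow> 'v::ab_group_add \<Rightarrow> 'v) \<Rightarrow> ('v \<Rightarrow> 'v \<Rightarrow> 'v) \<Rightarrow> 'v set
    \<Rightarrow> (('v, 'v, 'f) tens, 'v, 'f) tens \<Rightarrow> ('v, 'v, 'f) tens" where
  "bdry s b H = (SOME D. Vector_Spaces.linear fscale fscale D \<and>
      (\<forall>u\<in>H. \<forall>v\<in>H. \<forall>w\<in>H. D (wedge3 s u v w) =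
          wedge2 s (b u v) w + wedge2 s (b v w) u + wedge2 s (b w u) v))"

definition B2 :: "('f::field \<Rightarrow> 'v::ab_group_add \<Rightarrow> 'v) \<Rightarrow> ('v \<Rightarrow> 'v \<Rightarrow> 'v) \<Rightarrow> 'v set
    \<Rightarrow> ('v, 'v, 'f) tens set" where
  "B2 s b H = bdry s b H ` Lam3 s H"

abbreviation gel :: "('f::field \<Rightarrow> 'a::comm_ring_1 \<Rightarrow> 'a) \<Rightarrow> ('f \<Rightarrow> 'k::ab_group_add \<Rightarrow> 'k)
    \<Rightarrow> 'a \<Rightarrow> 'k \<Rightarrow> ('a, 'k, 'f) tens" where
  "gel sa sk a x \<equiv> tp sa sk a x"

definition gsp :: "('f::field \<Rightarrow> 'a::comm_ring_1 \<Rightarrow> 'a) \<Rightarrow> ('f \<Rightarrow> 'k::ab_group_add \<Rightarrow> 'k)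
    \<Rightarrow> ('a, 'k, 'f) tens set" where
  "gsp sa sk = tsp sa sk UNIV UNIV"

definition gbr :: "('f::field \<Rightarrow> 'a::comm_ring_1 \<Rightarrow> 'a) \<Rightarrow> ('f \<Rightarrow> 'k::ab_group_add \<Rightarrow> 'k)
    \<Rightarrow> ('k \<Rightarrow> 'k \<Rightarrow> 'k) \<Rightarrow> ('a, 'k, 'f) tens \<Rightarrow> ('a, 'k, 'f) tens \<Rightarrow> ('a, 'k, 'f) tens" where
  "gbr sa sk br = (SOME B. (\<forall>u. Vector_Spaces.linear fscale fscale (B u)) \<and>
      (\<forall>v. Vector_Spaces.linear fscale fscale (\<lambda>u. B u v)) \<and>
      (\<forall>a x a' x'. B (gel sa sk a x) (gel sa sk a' x') = gel sa sk (a * a') (br x x')))"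

definition B2g where
  "B2g sa sk br = B2 fscale (gbr sa sk br) (gsp sa sk)"

definition p1 :: "('f::field \<Rightarrow> 'a::comm_ring_1 \<Rightarrow> 'a) \<Rightarrow> ('f \<Rightarrow> 'k::ab_group_add \<Rightarrow> 'k)
    \<Rightarrow> (('a, 'k, 'f) tens, ('a, 'k, 'f) tens, 'f) tens
    \<Rightarrow> (('a, 'a, 'f) tens, ('k, 'k, 'f) tens, 'f) tens" where
  "p1 sa sk = (SOME L. Vector_Spaces.linear fscale fscale L \<and>
     (\<forall>a b x y. L (wedge2 fscale (gel sa sk a x) (gel sa sk b y)) =
                tp fscale fscale (wedge2 sa a b) (vee2 sk x y)))"

definition p2 :: "('f::field \<Rightarrow> 'a::comm_ring_1 \<Rightarrow> 'a) \<Rightarrow> ('f \<Rightarrow> 'k::ab_group_add \<Rightarrow> 'k)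
    \<Rightarrow> (('a, 'k, 'f) tens, ('a, 'k, 'f) tens, 'f) tens
    \<Rightarrow> ('a, ('k, 'k, 'f) tens, 'f) tens" where
  "p2 sa sk = (SOME L. Vector_Spaces.linear fscale fscale L \<and>
     (\<forall>a b x y. L (wedge2 fscale (gel sa sk a x) (gel sa sk b y)) =
                tp sa fscale (a * b) (wedge2 sk x y)))"

definition p3 :: "('f::field \<Rightarrow> 'a::comm_ring_1 \<Rightarrow> 'a) \<Rightarrow> ('f \<Rightarrow> 'k::ab_group_add \<Rightarrow> 'k)
    \<Rightarrow> (('a, 'k, 'f) tens, ('a, 'k, 'f) tens, 'f) tens
    \<Rightarrow> (('a, 'a, 'f) tens, ('k, 'k, 'f) tens, 'f) tens" where
  "p3 sa sk = (SOME L. Vector_Spaces.linear fscale fscale L \<and>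
     (\<forall>a b x y. L (wedge2 fscale (gel sa sk a x) (gel sa sk b y)) =
                tp fscale fscale (vee2 sa a b - vee2 sa (a * b) 1) (wedge2 sk x y)))"

definition emb1 :: "('f::field \<Rightarrow> 'a::comm_ring_1 \<Rightarrow> 'a) \<Rightarrow> ('f \<Rightarrow> 'k::ab_group_add \<Rightarrow> 'k)
    \<Rightarrow> (('a, 'a, 'f) tens, ('k, 'k, 'f) tens, 'f) tens
    \<Rightarrow> (('a, 'k, 'f) tens, ('a, 'k, 'f) tens, 'f) tens" where
  "emb1 sa sk = (SOME L. Vector_Spaces.linear fscale fscale L \<and>
     (\<forall>a b x y. L (tp fscale fscale (wedge2 sa a b) (vee2 sk x y)) =
        fscale (1/2) (wedge2 fscale (gel sa sk a x) (gel sa sk b y)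
                    + wedge2 fscale (gel sa sk a y) (gel sa sk b x))))"

definition emb3 :: "('f::field \<Rightarrow> 'a::comm_ring_1 \<Rightarrow> 'a) \<Rightarrow> ('f \<Rightarrow> 'k::ab_group_add \<Rightarrow> 'k)
    \<Rightarrow> (('a, 'a, 'f) tens, ('k, 'k, 'f) tens, 'f) tens
    \<Rightarrow> (('a, 'k, 'f) tens, ('a, 'k, 'f) tens, 'f) tens" where
  "emb3 sa sk = (SOME L. Vector_Spaces.linear fscale fscale L \<and>
     (\<forall>a b x y. L (tp fscale fscale (vee2 sa a b) (wedge2 sk x y)) =
        fscale (1/2) (wedge2 fscale (gel sa sk a x) (gel sa sk b y)
                    - wedge2 fscale (gel sa sk a y) (gel sa sk b x))))"

definition ssum :: "'v::ab_group_add set \<Rightarrow> 'v set \<Rightarrow> 'v set" where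
  "ssum U W = {u + w | u w. u \<in> U \<and> w \<in> W}"

definition kder :: "('f::field \<Rightarrow> 'k::ab_group_add \<Rightarrow> 'k) \<Rightarrow> ('k \<Rightarrow> 'k \<Rightarrow> 'k) \<Rightarrow> 'k set" where
  "kder sk br = module.span sk {br x y | x y. True}"

definition kS2 :: "('f::field \<Rightarrow> 'k::ab_group_add \<Rightarrow> 'k) \<Rightarrow> ('k \<Rightarrow> 'k \<Rightarrow> 'k) \<Rightarrow> ('k, 'k, 'f) tens set" where
  "kS2 sk br = fspan {vee2 sk (br z x) y + vee2 sk x (br z y) | x y z. True}"

definition kveek' :: "('f::field \<Rightarrow> 'k::ab_group_add \<Rightarrow> 'k) \<Rightarrow> ('k \<Rightarrow> 'k \<Rightarrow> 'k) \<Rightarrow> ('k, 'k, 'f) tens set" where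
  "kveek' sk br = fspan {vee2 sk x y | x y. y \<in> kder sk br}"

definition kwedgek' :: "('f::field \<Rightarrow> 'k::ab_group_add \<Rightarrow> 'k) \<Rightarrow> ('k \<Rightarrow> 'k \<Rightarrow> 'k) \<Rightarrow> ('k, 'k, 'f) tens set" where
  "kwedgek' sk br = fspan {wedge2 sk x y | x y. y \<in> kder sk br}"

definition TA :: "('f::field \<Rightarrow> 'a::comm_ring_1 \<Rightarrow> 'a) \<Rightarrow> ('a, 'a, 'f) tens set" where
  "TA sa = fspan {wedge2 sa (a * b) c + wedge2 sa (b * c) a + wedge2 sa (c * a) b | a b c. True}"

definition T0A :: "('f::field \<Rightarrow> 'a::comm_ring_1 \<Rightarrow> 'a) \<Rightarrow> ('a, 'a, 'f) tens set" where
  "T0A sa = fspan {wedge2 sa (a * b) c + wedge2 sa (b * c) a + wedge2 sa (c * a) b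
                   - wedge2 sa (a * b * c) 1 | a b c. True}"

definition multA :: "('f::field \<Rightarrow> 'a::comm_ring_1 \<Rightarrow> 'a) \<Rightarrow> ('a, 'a, 'f) tens \<Rightarrow> 'a" where
  "multA sa = (SOME L. Vector_Spaces.linear fscale sa L \<and> (\<forall>a b. L (tp sa sa a b) = a * b))"

definition IA :: "('f::field \<Rightarrow> 'a::comm_ring_1 \<Rightarrow> 'a) \<Rightarrow> ('a, 'a, 'f) tens set" where
  "IA sa = {t \<in> Sym2 sa UNIV. multA sa t = 0}"

end

theory Submission
  imports Defs
begin

(* B_2(g) is spanned by the boundaries d(ax, by, cz) = ab[x,y] ^ cz + bc[y,z] ^ ax + ca[z,x] ^ by
   of triples of pure elements, so each p_i(B_2(g)) is spanned by the explicitly computable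
   p_i d(ax, by, cz); this gives the inclusions of the images into the claimed spaces.
   Conversely, every generator of the claimed spaces is reached through identities in
   Lambda^2(g) that only use that the bracket is alternating: the element of
   Lambda^2(A) (x) k.S^2(k) built from a ^ b and [z,x] v y + x v [z,y] is half a sum of two
   boundaries with a unit entry; combining boundaries with unit entries gives relations
   between the elements (a v b - ab v 1) (x) [y,z] ^ x of I_A (x) (k ^ k'), and summing
   these cyclically in x, y, z isolates each of them; the T_0(A) (x) (k v k') generators
   are then combinations of the two previous families and boundaries.
   Linear maps out of the concrete tensor model are defined on bases, pure tensors of basis
   vectors being linearly independent. *)

lemma vector_space_times: "Vector_Spaces.vector_space ((*) :: 'f::field \<Rightarrow> 'f \<Rightarrow> 'f)"
  by unfold_locales (auto simp: algebra_simps)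

lemma linear_map_add: "Vector_Spaces.linear s1 s2 f \<Longrightarrow> f (x + y) = f x + f y"
  by (simp add: Vector_Spaces.linear_iff)

lemma linear_map_scale: "Vector_Spaces.linear s1 s2 f \<Longrightarrow> f (s1 c x) = s2 c (f x)"
  by (simp add: Vector_Spaces.linear_iff)

lemma linear_map_0: "Vector_Spaces.linear s1 s2 f \<Longrightarrow> f 0 = 0"
  by (metis add_cancel_right_right linear_map_add)

lemma linear_map_neg: "Vector_Spaces.linear s1 s2 f \<Longrightarrow> f (- x) = - f x"
  by (metis add.right_inverse add_eq_0_iff linear_map_add linear_map_0)

lemma linear_map_diff: "Vector_Spaces.linear s1 s2 f \<Longrightarrow> f (x - y) = f x - f y"
  by (metis diff_conv_add_uminus linear_map_add linear_map_neg)

lemma linear_vector_spaces: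
  "Vector_Spaces.linear s1 s2 f \<Longrightarrow> Vector_Spaces.vector_space s1 \<and> Vector_Spaces.vector_space s2"
  by (simp add: Vector_Spaces.linear_iff)

lemma linearI_additive_homogeneous:
  "Vector_Spaces.vector_space s1 \<Longrightarrow> Vector_Spaces.vector_space s2 \<Longrightarrow>
   (\<And>x y. f (x + y) = f x + f y) \<Longrightarrow> (\<And>c x. f (s1 c x) = s2 c (f x)) \<Longrightarrow>
   Vector_Spaces.linear s1 s2 f"
  by (simp add: Vector_Spaces.linear_iff)

lemma linear_compose_apply:
  "Vector_Spaces.linear s1 s2 f \<Longrightarrow> Vector_Spaces.linear s2 s3 g \<Longrightarrow>
   Vector_Spaces.linear s1 s3 (\<lambda>x. g (f x))"
  using Vector_Spaces.linear_compose[of s1 s2 f s3 g] by (simp add: o_def)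

lemma linear_add_fun:
  assumes "Vector_Spaces.linear s1 s2 f" "Vector_Spaces.linear s1 s2 g"
  shows "Vector_Spaces.linear s1 s2 (\<lambda>x. f x + g x)"
  using assms linear_vector_spaces[OF assms(1)]
  by (intro vector_space_pair.linear_compose_add) (simp_all add: vector_space_pair_def)

lemma linear_diff_fun:
  assumes "Vector_Spaces.linear s1 s2 f" "Vector_Spaces.linear s1 s2 g"
  shows "Vector_Spaces.linear s1 s2 (\<lambda>x. f x - g x)"
  using assms linear_vector_spaces[OF assms(1)]
  by (intro vector_space_pair.linear_compose_sub) (simp_all add: vector_space_pair_def)

lemma linear_eq_on_spanning:
  assumes "Vector_Spaces.linear s1 s2 f" "Vector_Spaces.linear s1 s2 g"
    and "UNIV \<subseteq> module.span s1 B" "\<And>b. b \<in> B \<Longrightarrow> f b = g b"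
  shows "f x = g x"
proof -
  interpret p: vector_space_pair s1 s2
    using linear_vector_spaces[OF assms(1)] by (simp add: vector_space_pair_def)
  show ?thesis by (rule p.linear_eq_on[OF assms(1,2) _ assms(4)]) (use assms(3) in auto)
qed

lemma bilinear_eq_on_spanning:
  assumes f1: "\<And>w. Vector_Spaces.linear s1 s3 (\<lambda>v. f v w)" and f2: "\<And>v. Vector_Spaces.linear s2 s3 (f v)"
    and g1: "\<And>w. Vector_Spaces.linear s1 s3 (\<lambda>v. g v w)" and g2: "\<And>v. Vector_Spaces.linear s2 s3 (g v)"
    and X: "UNIV \<subseteq> module.span s1 X" and Y: "UNIV \<subseteq> module.span s2 Y"
    and eq: "\<And>x y. x \<in> X \<Longrightarrow> y \<in> Y \<Longrightarrow> f x y = g x y"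
  shows "f v w = g v w"
proof -
  have "f x w = g x w" if "x \<in> X" for x
    by (rule linear_eq_on_spanning[OF f2 g2 Y]) (use eq that in auto)
  then show ?thesis by (rule linear_eq_on_spanning[OF f1 g1 X])
qed

lemma exists_basis:
  assumes "Vector_Spaces.vector_space s"
  obtains B where "\<not> module.dependent s B" "UNIV \<subseteq> module.span s B"
proof -
  interpret vector_space s by fact
  obtain B where "independent B" "UNIV \<subseteq> span B" using basis_exists[of UNIV] by blast
  then show ?thesis by (rule that)
qed

lemma linear_extend_on_independent_family:
  assumes vs1: "Vector_Spaces.vector_space s1" and vs2: "Vector_Spaces.vector_space s2"
    and inj: "inj_on e I" and ind: "\<not> module.dependent s1 (e ` I)"
  shows "\<exists>L. Vector_Spaces.linear s1 s2 L \<and> (\<forall>i\<in>I. L (e i) = h i)"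
proof -
  interpret p: vector_space_pair s1 s2 using vs1 vs2 by (simp add: vector_space_pair_def)
  obtain L where "Vector_Spaces.linear s1 s2 L" "\<forall>y\<in>e ` I. L y = h (the_inv_into I e y)"
    using p.linear_independent_extend[OF ind, of "\<lambda>y. h (the_inv_into I e y)"] by blast
  then show ?thesis using the_inv_into_f_f[OF inj] by auto
qed

lemma subspace_linear_vimage:
  assumes "Vector_Spaces.linear s1 s2 f" "module.subspace s2 S"
  shows "module.subspace s1 {x. f x \<in> S}"
proof -
  interpret module_hom s1 s2 f using assms(1) by (simp add: module_hom_iff_linear)
  show ?thesis by (rule subspace_linear_preimage) fact
qed

lemma subspace_linear_image:
  assumes "Vector_Spaces.linear s1 s2 f" "module.subspace s1 S"
  shows "module.subspace s2 (f ` S)"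
proof -
  interpret module_hom s1 s2 f using assms(1) by (simp add: module_hom_iff_linear)
  show ?thesis by (rule subspace_image) fact
qed

lemma linear_image_span:
  assumes "Vector_Spaces.linear s1 s2 f"
  shows "f ` module.span s1 S = module.span s2 (f ` S)"
proof -
  interpret module_hom s1 s2 f using assms(1) by (simp add: module_hom_iff_linear)
  show ?thesis by (rule span_image[symmetric])
qed

lemma span_subset_subspace:
  assumes "Vector_Spaces.vector_space s" "module.subspace s T" "B \<subseteq> T"
  shows "module.span s B \<subseteq> T"
proof -
  interpret vector_space s by fact
  show ?thesis using assms(2,3) span_minimal by blast
qed

lemma bilinear_span_into_subspace:
  assumes l1: "\<And>w. Vector_Spaces.linear s1 s3 (\<lambda>v. f v w)"
    and l2: "\<And>v. Vector_Spaces.linear s2 s3 (f v)"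
    and S: "module.subspace s3 S" and AB: "\<And>a b. a \<in> A \<Longrightarrow> b \<in> B \<Longrightarrow> f a b \<in> S"
    and v: "v \<in> module.span s1 A" and w: "w \<in> module.span s2 B"
  shows "f v w \<in> S"
proof -
  have vs: "Vector_Spaces.vector_space s1" "Vector_Spaces.vector_space s2"
    using linear_vector_spaces[OF l1] linear_vector_spaces[OF l2] by blast+
  have "f a w \<in> S" if "a \<in> A" for a
    using span_subset_subspace[OF vs(2) subspace_linear_vimage[OF l2 S], of B] AB that w by blast
  then show ?thesis
    using span_subset_subspace[OF vs(1) subspace_linear_vimage[OF l1 S], of A] v by blast
qed

lemma trilinear_span_into_subspace:
  assumes l1: "\<And>v w. Vector_Spaces.linear s1 s4 (\<lambda>u. f u v w)"
    and l2: "\<And>u w. Vector_Spaces.linear s2 s4 (\<lambda>v. f u v w)"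
    and l3: "\<And>u v. Vector_Spaces.linear s3 s4 (\<lambda>w. f u v w)"
    and S: "module.subspace s4 S"
    and ABC: "\<And>a b c. a \<in> A \<Longrightarrow> b \<in> B \<Longrightarrow> c \<in> C \<Longrightarrow> f a b c \<in> S"
    and u: "u \<in> module.span s1 A" and v: "v \<in> module.span s2 B" and w: "w \<in> module.span s3 C"
  shows "f u v w \<in> S"
proof -
  have "f a v w \<in> S" if "a \<in> A" for a
    by (rule bilinear_span_into_subspace[OF l2 l3 S _ v w]) (use ABC that in auto)
  then show ?thesis
    using span_subset_subspace[OF conjunct1[OF linear_vector_spaces[OF l1]]
        subspace_linear_vimage[OF l1 S], of A] u by blast
qed

lemma vector_space_fscale: "Vector_Spaces.vector_space (fscale :: 'f::field \<Rightarrow> ('x \<Rightarrow> 'f) \<Rightarrow> _)"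
  by unfold_locales (auto simp: fscale_def fun_eq_iff algebra_simps)

lemma module_fscale: "module (fscale :: 'f::field \<Rightarrow> ('x \<Rightarrow> 'f) \<Rightarrow> _)"
  using vector_space_fscale module_iff_vector_space by blast

lemma fscale_apply [simp]: "fscale c f x = c * f x"
  by (simp add: fscale_def)

lemma sum_fun_apply: "(\<Sum>i\<in>A. f i) x = (\<Sum>i\<in>A. f i x)"
  by (induct A rule: infinite_finite_induct) auto

abbreviation fsub :: "('x \<Rightarrow> 'f::field) set \<Rightarrow> bool" where
  "fsub S \<equiv> module.subspace fscale S"

lemma fsub_add: "fsub S \<Longrightarrow> x \<in> S \<Longrightarrow> y \<in> S \<Longrightarrow> x + y \<in> S"
  using module.subspace_add[OF module_fscale] by blast

lemma fsub_diff: "fsub S \<Longrightarrow> x \<in> S \<Longrightarrow> y \<in> S \<Longrightarrow> x - y \<in> S"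
  using module.subspace_diff[OF module_fscale] by blast

lemma fsub_neg: "fsub S \<Longrightarrow> x \<in> S \<Longrightarrow> - x \<in> S"
  using module.subspace_neg[OF module_fscale] by blast

lemma fsub_scale: "fsub S \<Longrightarrow> x \<in> S \<Longrightarrow> fscale c x \<in> S"
  using module.subspace_scale[OF module_fscale] by blast

lemma fsub_fspan: "fsub (fspan S)"
  unfolding fspan_def using module.subspace_span[OF module_fscale] .

lemma fspan_base: "x \<in> S \<Longrightarrow> x \<in> fspan S"
  unfolding fspan_def using module.span_base[OF module_fscale] .

lemma fspan_subset: "fsub T \<Longrightarrow> S \<subseteq> T \<Longrightarrow> fspan S \<subseteq> T"
  unfolding fspan_def using span_subset_subspace[OF vector_space_fscale] by blast

lemma fspan_mono: "S \<subseteq> T \<Longrightarrow> fspan S \<subseteq> fspan T"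
  by (rule fspan_subset[OF fsub_fspan]) (use fspan_base in blast)

lemma fsub_ssum: "fsub U \<Longrightarrow> fsub V \<Longrightarrow> fsub (ssum U V)"
  unfolding ssum_def using vector_space.subspace_sums[OF vector_space_fscale] by blast

lemma ssum_memI: "u \<in> U \<Longrightarrow> v \<in> V \<Longrightarrow> u + v \<in> ssum U V"
  unfolding ssum_def by blast

lemma ssum_subset: "fsub S \<Longrightarrow> U \<subseteq> S \<Longrightarrow> V \<subseteq> S \<Longrightarrow> ssum U V \<subseteq> S"
  unfolding ssum_def using fsub_add by blast

section \<open>Pure tensors\<close>

lemma tp_add_left: "tp s1 s2 (u + u') v = tp s1 s2 u v + tp s1 s2 u' v"
  by (auto simp: fun_eq_iff tp_def linear_map_add[where x=u and y=u'] algebra_simps)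
lemma tp_add_right: "tp s1 s2 u (v + v') = tp s1 s2 u v + tp s1 s2 u v'"
  by (auto simp: fun_eq_iff tp_def linear_map_add[where x=v and y=v'] algebra_simps)
lemma tp_scale_left: "tp s1 s2 (s1 c u) v = fscale c (tp s1 s2 u v)"
  by (auto simp: fun_eq_iff tp_def linear_map_scale[where x=u and c=c] algebra_simps)
lemma tp_scale_right: "tp s1 s2 u (s2 c v) = fscale c (tp s1 s2 u v)"
  by (auto simp: fun_eq_iff tp_def linear_map_scale[where x=v and c=c] algebra_simps)
lemma tp_neg_left: "tp s1 s2 (- u) v = - tp s1 s2 u v"
  by (auto simp: fun_eq_iff tp_def linear_map_neg[where x=u] algebra_simps)
lemma tp_neg_right: "tp s1 s2 u (- v) = - tp s1 s2 u v"
  by (auto simp: fun_eq_iff tp_def linear_map_neg[where x=v] algebra_simps)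
lemma tp_diff_left: "tp s1 s2 (u - u') v = tp s1 s2 u v - tp s1 s2 u' v"
  by (auto simp: fun_eq_iff tp_def linear_map_diff[where x=u and y=u'] algebra_simps)
lemma tp_diff_right: "tp s1 s2 u (v - v') = tp s1 s2 u v - tp s1 s2 u v'"
  by (auto simp: fun_eq_iff tp_def linear_map_diff[where x=v and y=v'] algebra_simps)
lemma tp_zero_left: "tp s1 s2 0 v = 0"
  by (auto simp: fun_eq_iff tp_def linear_map_0)
lemma tp_zero_right: "tp s1 s2 u 0 = 0"
  by (auto simp: fun_eq_iff tp_def linear_map_0)

lemmas tp_bilinear_simps = tp_add_left tp_add_right tp_scale_left tp_scale_right tp_neg_left
  tp_neg_right tp_diff_left tp_diff_right tp_zero_left tp_zero_right

lemma linear_tp_left: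
  "Vector_Spaces.vector_space s1 \<Longrightarrow> Vector_Spaces.linear s1 fscale (\<lambda>u. tp s1 s2 u v)"
  by (rule linearI_additive_homogeneous) (auto simp: vector_space_fscale tp_add_left tp_scale_left)

lemma linear_tp_right:
  "Vector_Spaces.vector_space s2 \<Longrightarrow> Vector_Spaces.linear s2 fscale (tp s1 s2 u)"
  by (rule linearI_additive_homogeneous) (auto simp: vector_space_fscale tp_add_right tp_scale_right)

lemma tp_base: "u \<in> U \<Longrightarrow> v \<in> V \<Longrightarrow> tp s1 s2 u v \<in> tsp s1 s2 U V"
  unfolding tsp_def by (rule fspan_base) blast

lemma fsub_tsp: "fsub (tsp s1 s2 U V)"
  unfolding tsp_def by (rule fsub_fspan)

lemma tsp_subset_subspace:
  assumes vs1: "Vector_Spaces.vector_space s1" and vs2: "Vector_Spaces.vector_space s2"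
    and S: "fsub S" and U: "U \<subseteq> module.span s1 U0" and V: "V \<subseteq> module.span s2 V0"
    and gen: "\<And>u v. u \<in> U0 \<Longrightarrow> v \<in> V0 \<Longrightarrow> tp s1 s2 u v \<in> S"
  shows "tsp s1 s2 U V \<subseteq> S"
  unfolding tsp_def
proof (rule fspan_subset[OF S], safe)
  fix u v assume "u \<in> U" "v \<in> V"
  then show "tp s1 s2 u v \<in> S"
    using bilinear_span_into_subspace[where f="tp s1 s2", OF linear_tp_left[OF vs1]
        linear_tp_right[OF vs2] S gen] U V by blast
qed

lemma exists_coordinate_functional:
  assumes vs: "Vector_Spaces.vector_space s" and ind: "\<not> module.dependent s X" and x0: "x0 \<in> X"
  shows "\<exists>\<phi>. Vector_Spaces.linear s (*) \<phi> \<and> \<phi> x0 = 1 \<and> (\<forall>x\<in>X. x \<noteq> x0 \<longrightarrow> \<phi> x = 0)"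
  using linear_extend_on_independent_family[OF vs vector_space_times inj_on_id[of X],
      of "\<lambda>x. if x = x0 then 1 else 0"] ind x0 by auto

text \<open>Pure tensors are functions on pairs of functionals; evaluated at a pair of coordinate
  functionals they behave like the dual basis.\<close>

lemma tp_dual_point:
  assumes vs1: "Vector_Spaces.vector_space s1" and vs2: "Vector_Spaces.vector_space s2"
    and iX: "\<not> module.dependent s1 X" and iY: "\<not> module.dependent s2 Y"
    and x0: "x0 \<in> X" and y0: "y0 \<in> Y"
  shows "\<exists>p. \<forall>x\<in>X. \<forall>y\<in>Y. tp s1 s2 x y p = (if x = x0 \<and> y = y0 then 1 else 0)"
proof -
  obtain \<phi> where \<phi>: "Vector_Spaces.linear s1 (*) \<phi>" "\<phi> x0 = 1" "\<forall>x\<in>X. x \<noteq> x0 \<longrightarrow> \<phi> x = 0"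
    using exists_coordinate_functional[OF vs1 iX x0] by blast
  obtain \<psi> where \<psi>: "Vector_Spaces.linear s2 (*) \<psi>" "\<psi> y0 = 1" "\<forall>y\<in>Y. y \<noteq> y0 \<longrightarrow> \<psi> y = 0"
    using exists_coordinate_functional[OF vs2 iY y0] by blast
  show ?thesis
  proof (rule exI[of _ "(\<phi>, \<psi>)"], intro ballI)
    fix x y assume xy: "x \<in> X" "y \<in> Y"
    have "tp s1 s2 x y (\<phi>, \<psi>) = \<phi> x * \<psi> y" by (simp add: tp_def \<phi>(1) \<psi>(1))
    then show "tp s1 s2 x y (\<phi>, \<psi>) = (if x = x0 \<and> y = y0 then 1 else 0)"
      using \<phi>(2,3) \<psi>(2,3) xy by (cases "x = x0"; cases "y = y0") simp_all
  qed
qed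

lemma tp_basis_independent:
  assumes vs1: "Vector_Spaces.vector_space s1" and vs2: "Vector_Spaces.vector_space s2"
    and iX: "\<not> module.dependent s1 X" and iY: "\<not> module.dependent s2 Y"
  shows "inj_on (\<lambda>(x, y). tp s1 s2 x y) (X \<times> Y)"
    and "\<not> module.dependent fscale ((\<lambda>(x, y). tp s1 s2 x y) ` (X \<times> Y))"
proof -
  note dual = tp_dual_point[OF vs1 vs2 iX iY]
  show "inj_on (\<lambda>(x, y). tp s1 s2 x y) (X \<times> Y)"
  proof (rule inj_onI, clarsimp)
    fix x y x' y' assume a: "x \<in> X" "y \<in> Y" "x' \<in> X" "y' \<in> Y" and e: "tp s1 s2 x y = tp s1 s2 x' y'"
    obtain p where p: "\<forall>x\<in>X. \<forall>y\<in>Y. tp s1 s2 x y p = (if x = x' \<and> y = y' then 1 else 0)"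
      using dual[OF a(3,4)] by blast
    have "tp s1 s2 x y p = 1" using e p a(3,4) by simp
    then show "x = x' \<and> y = y'" using p a(1,2)
      by (metis zero_neq_one)
  qed
  interpret m: module "fscale :: 'a \<Rightarrow> _" by (rule module_fscale)
  show "m.independent ((\<lambda>(x, y). tp s1 s2 x y) ` (X \<times> Y))"
    unfolding m.independent_explicit_module
  proof (intro allI impI)
    fix t u v assume t: "finite t" "t \<subseteq> (\<lambda>(x, y). tp s1 s2 x y) ` (X \<times> Y)"
      and s: "(\<Sum>v\<in>t. fscale (u v) v) = 0" and v: "v \<in> t"
    have "v \<in> (\<lambda>(x, y). tp s1 s2 x y) ` (X \<times> Y)" using t v by blast
    then obtain x0 y0 where xy0: "x0 \<in> X" "y0 \<in> Y" "v = tp s1 s2 x0 y0" by auto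
    obtain p where p: "\<forall>x\<in>X. \<forall>y\<in>Y. tp s1 s2 x y p = (if x = x0 \<and> y = y0 then 1 else 0)"
      using dual[OF xy0(1,2)] by blast
    have pv: "w p = (if w = v then 1 else 0)" if "w \<in> t" for w
    proof -
      have "w \<in> (\<lambda>(x, y). tp s1 s2 x y) ` (X \<times> Y)" using t that by blast
      then obtain x y where xy: "x \<in> X" "y \<in> Y" "w = tp s1 s2 x y" by auto
      have wp: "w p = (if x = x0 \<and> y = y0 then 1 else 0)" using p xy by simp
      show ?thesis
      proof (cases "x = x0 \<and> y = y0")
        case True then show ?thesis using wp xy xy0 by simp
      next
        case False
        then have "w \<noteq> v" using wp xy0 p by (metis one_neq_zero)
        then show ?thesis using wp False by simp
      qed
    qed
    have "0 = (\<Sum>w\<in>t. fscale (u w) w) p" using s by simp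
    also have "\<dots> = (\<Sum>w\<in>t. u w * w p)" by (simp add: sum_fun_apply)
    also have "\<dots> = (\<Sum>w\<in>t. if w = v then u w else 0)"
      by (rule sum.cong) (auto simp: pv)
    also have "\<dots> = u v" using t v by simp
    finally show "u v = 0" by simp
  qed
qed

lemma tp_family_independent:
  assumes vs1: "Vector_Spaces.vector_space s1" and vs2: "Vector_Spaces.vector_space s2"
    and e: "inj_on e I" "\<not> module.dependent s1 (e ` I)"
    and d: "inj_on d J" "\<not> module.dependent s2 (d ` J)"
  shows "inj_on (\<lambda>(i, j). tp s1 s2 (e i) (d j)) (I \<times> J)"
    and "\<not> module.dependent fscale ((\<lambda>(i, j). tp s1 s2 (e i) (d j)) ` (I \<times> J))"
proof -
  have fam: "(\<lambda>(i, j). tp s1 s2 (e i) (d j)) = (\<lambda>(x, y). tp s1 s2 x y) \<circ> map_prod e d"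
    by auto
  have img: "map_prod e d ` (I \<times> J) = e ` I \<times> d ` J"
    by (rule map_prod_surj_on) auto
  note tp = tp_basis_independent[OF vs1 vs2 e(2) d(2)]
  show "inj_on (\<lambda>(i, j). tp s1 s2 (e i) (d j)) (I \<times> J)"
    unfolding fam using comp_inj_on[OF map_prod_inj_on[OF e(1) d(1)]] tp(1) img by simp
  show "\<not> module.dependent fscale ((\<lambda>(i, j). tp s1 s2 (e i) (d j)) ` (I \<times> J))"
    unfolding fam image_comp[symmetric] img using tp(2) .
qed

section \<open>Multilinear maps out of tensor products\<close>

lemma tp_universal:
  assumes vs1: "Vector_Spaces.vector_space s1" and vs2: "Vector_Spaces.vector_space s2"
    and vs3: "Vector_Spaces.vector_space s3"
    and l1: "\<And>w. Vector_Spaces.linear s1 s3 (\<lambda>v. \<beta> v w)"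
    and l2: "\<And>v. Vector_Spaces.linear s2 s3 (\<beta> v)"
  shows "\<exists>L. Vector_Spaces.linear fscale s3 L \<and> (\<forall>v w. L (tp s1 s2 v w) = \<beta> v w)"
proof -
  obtain X where X: "\<not> module.dependent s1 X" "UNIV \<subseteq> module.span s1 X" by (rule exists_basis[OF vs1])
  obtain Y where Y: "\<not> module.dependent s2 Y" "UNIV \<subseteq> module.span s2 Y" by (rule exists_basis[OF vs2])
  obtain L where L: "Vector_Spaces.linear fscale s3 L"
    "\<forall>(x, y)\<in>X \<times> Y. L (tp s1 s2 x y) = \<beta> x y"
    using linear_extend_on_independent_family[OF vector_space_fscale vs3
        tp_basis_independent[OF vs1 vs2 X(1) Y(1)], of "\<lambda>(x, y). \<beta> x y"]
    by (auto simp: case_prod_beta)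
  have "L (tp s1 s2 v w) = \<beta> v w" for v w
    by (rule bilinear_eq_on_spanning[where f="\<lambda>v w. L (tp s1 s2 v w)",
          OF linear_compose_apply[OF linear_tp_left[OF vs1] L(1)]
             linear_compose_apply[OF linear_tp_right[OF vs2] L(1)] l1 l2 X(2) Y(2)])
       (use L(2) in auto)
  then show ?thesis using L(1) by blast
qed

lemma tp_tp_universal:
  assumes vs1: "Vector_Spaces.vector_space s1" and vs2: "Vector_Spaces.vector_space s2"
    and vs3: "Vector_Spaces.vector_space s3" and vs4: "Vector_Spaces.vector_space s4"
    and vs5: "Vector_Spaces.vector_space s5"
    and l1: "\<And>x b y. Vector_Spaces.linear s1 s5 (\<lambda>a. \<gamma> a x b y)"
    and l2: "\<And>a b y. Vector_Spaces.linear s2 s5 (\<lambda>x. \<gamma> a x b y)"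
    and l3: "\<And>a x y. Vector_Spaces.linear s3 s5 (\<lambda>b. \<gamma> a x b y)"
    and l4: "\<And>a x b. Vector_Spaces.linear s4 s5 (\<lambda>y. \<gamma> a x b y)"
  shows "\<exists>L. Vector_Spaces.linear fscale s5 L \<and>
     (\<forall>a x b y. L (tp fscale fscale (tp s1 s2 a x) (tp s3 s4 b y)) = \<gamma> a x b y)"
proof -
  obtain X1 where X1: "\<not> module.dependent s1 X1" "UNIV \<subseteq> module.span s1 X1" by (rule exists_basis[OF vs1])
  obtain X2 where X2: "\<not> module.dependent s2 X2" "UNIV \<subseteq> module.span s2 X2" by (rule exists_basis[OF vs2])
  obtain X3 where X3: "\<not> module.dependent s3 X3" "UNIV \<subseteq> module.span s3 X3" by (rule exists_basis[OF vs3])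
  obtain X4 where X4: "\<not> module.dependent s4 X4" "UNIV \<subseteq> module.span s4 X4" by (rule exists_basis[OF vs4])
  let ?LL = "\<lambda>L a x b y. L (tp fscale fscale (tp s1 s2 a x) (tp s3 s4 b y))"
  obtain L where L: "Vector_Spaces.linear fscale s5 L"
    "\<forall>((a, x), (b, y))\<in>(X1 \<times> X2) \<times> (X3 \<times> X4). ?LL L a x b y = \<gamma> a x b y"
    using linear_extend_on_independent_family[OF vector_space_fscale vs5
        tp_family_independent[OF vector_space_fscale vector_space_fscale
          tp_basis_independent[OF vs1 vs2 X1(1) X2(1)] tp_basis_independent[OF vs3 vs4 X3(1) X4(1)]],
        of "\<lambda>((a, x), (b, y)). \<gamma> a x b y"]
    by (auto simp: case_prod_beta)
  have lin1: "Vector_Spaces.linear s1 s5 (\<lambda>a. ?LL L a x b y)" for x b y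
    by (rule linear_compose_apply[OF linear_compose_apply[OF linear_tp_left[OF vs1]
          linear_tp_left[OF vector_space_fscale]] L(1)])
  have lin2: "Vector_Spaces.linear s2 s5 (\<lambda>x. ?LL L a x b y)" for a b y
    by (rule linear_compose_apply[OF linear_compose_apply[OF linear_tp_right[OF vs2]
          linear_tp_left[OF vector_space_fscale]] L(1)])
  have lin3: "Vector_Spaces.linear s3 s5 (\<lambda>b. ?LL L a x b y)" for a x y
    by (rule linear_compose_apply[OF linear_compose_apply[OF linear_tp_left[OF vs3]
          linear_tp_right[OF vector_space_fscale]] L(1)])
  have lin4: "Vector_Spaces.linear s4 s5 (\<lambda>y. ?LL L a x b y)" for a x b
    by (rule linear_compose_apply[OF linear_compose_apply[OF linear_tp_right[OF vs4]
          linear_tp_right[OF vector_space_fscale]] L(1)])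
  have on_basis34: "?LL L a x b y = \<gamma> a x b y" if "b \<in> X3" "y \<in> X4" for a x b y
    by (rule bilinear_eq_on_spanning[where f="\<lambda>a x. ?LL L a x b y", OF lin1 lin2 l1 l2 X1(2) X2(2)])
       (use L(2) that in auto)
  have "?LL L a x b y = \<gamma> a x b y" for a x b y
    by (rule bilinear_eq_on_spanning[where f="?LL L a x", OF lin3 lin4 l3 l4 X3(2) X4(2)])
       (use on_basis34 in auto)
  then show ?thesis using L(1) by blast
qed

lemma tp3_universal:
  assumes vs: "Vector_Spaces.vector_space s" and vs5: "Vector_Spaces.vector_space s5"
    and l1: "\<And>v w. Vector_Spaces.linear s s5 (\<lambda>u. \<gamma> u v w)"
    and l2: "\<And>u w. Vector_Spaces.linear s s5 (\<lambda>v. \<gamma> u v w)"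
    and l3: "\<And>u v. Vector_Spaces.linear s s5 (\<lambda>w. \<gamma> u v w)"
  shows "\<exists>L. Vector_Spaces.linear fscale s5 L \<and> (\<forall>u v w. L (tp3 s u v w) = \<gamma> u v w)"
proof -
  obtain X where X: "\<not> module.dependent s X" "UNIV \<subseteq> module.span s X" by (rule exists_basis[OF vs])
  have X': "inj_on (\<lambda>x. x) X" "\<not> module.dependent s ((\<lambda>x. x) ` X)" using X(1) by simp_all
  let ?LL = "\<lambda>L u v w. L (tp3 s u v w)"
  obtain L where L: "Vector_Spaces.linear fscale s5 L"
    "\<forall>((u, v), w)\<in>(X \<times> X) \<times> X. ?LL L u v w = \<gamma> u v w"
    using linear_extend_on_independent_family[OF vector_space_fscale vs5
        tp_family_independent[OF vector_space_fscale vs tp_basis_independent[OF vs vs X(1) X(1)] X'],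
        of "\<lambda>((u, v), w). \<gamma> u v w"]
    by (auto simp: case_prod_beta tp3_def)
  have lin1: "Vector_Spaces.linear s s5 (\<lambda>u. ?LL L u v w)" for v w
    unfolding tp3_def by (rule linear_compose_apply[OF linear_compose_apply[OF linear_tp_left[OF vs]
          linear_tp_left[OF vector_space_fscale]] L(1)])
  have lin2: "Vector_Spaces.linear s s5 (\<lambda>v. ?LL L u v w)" for u w
    unfolding tp3_def by (rule linear_compose_apply[OF linear_compose_apply[OF linear_tp_right[OF vs]
          linear_tp_left[OF vector_space_fscale]] L(1)])
  have lin3: "Vector_Spaces.linear s s5 (\<lambda>w. ?LL L u v w)" for u v
    unfolding tp3_def by (rule linear_compose_apply[OF linear_tp_right[OF vs] L(1)])
  have on_basis3: "?LL L u v w = \<gamma> u v w" if "w \<in> X" for u v w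
    by (rule bilinear_eq_on_spanning[where f="\<lambda>u v. ?LL L u v w", OF lin1 lin2 l1 l2 X(2) X(2)])
       (use L(2) that in auto)
  have "?LL L u v w = \<gamma> u v w" for u v w
    by (rule linear_eq_on_spanning[OF lin3 l3 X(2)]) (use on_basis3 in auto)
  then show ?thesis using L(1) by blast
qed

lemma wedge2_swap: "wedge2 s v u = - wedge2 s u v"
  by (simp add: wedge2_def tp_bilinear_simps fun_eq_iff algebra_simps)

lemma wedge2_neg_left: "wedge2 s (- u) v = - wedge2 s u v"
  by (simp add: wedge2_def tp_bilinear_simps fun_eq_iff algebra_simps)

lemma vee2_swap: "vee2 s v u = vee2 s u v"
  by (simp add: vee2_def tp_bilinear_simps fun_eq_iff algebra_simps)

lemma vee2_zero_left: "vee2 s 0 v = 0"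
  by (simp add: vee2_def tp_bilinear_simps fun_eq_iff)

lemma linear_fscale: "Vector_Spaces.linear fscale fscale (fscale c)"
  by (rule linearI_additive_homogeneous) (auto simp: vector_space_fscale fun_eq_iff algebra_simps)

lemma linear_wedge2_left: "Vector_Spaces.vector_space s \<Longrightarrow> Vector_Spaces.linear s fscale (\<lambda>u. wedge2 s u v)"
  by (rule linearI_additive_homogeneous)
     (auto simp: vector_space_fscale wedge2_def tp_bilinear_simps fun_eq_iff algebra_simps)

lemma linear_wedge2_right: "Vector_Spaces.vector_space s \<Longrightarrow> Vector_Spaces.linear s fscale (wedge2 s u)"
  by (rule linearI_additive_homogeneous)
     (auto simp: vector_space_fscale wedge2_def tp_bilinear_simps fun_eq_iff algebra_simps)

lemma linear_vee2_left: "Vector_Spaces.vector_space s \<Longrightarrow> Vector_Spaces.linear s fscale (\<lambda>u. vee2 s u v)"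
  by (rule linearI_additive_homogeneous)
     (auto simp: vector_space_fscale vee2_def tp_bilinear_simps fun_eq_iff algebra_simps)

lemma linear_vee2_right: "Vector_Spaces.vector_space s \<Longrightarrow> Vector_Spaces.linear s fscale (vee2 s u)"
  by (rule linearI_additive_homogeneous)
     (auto simp: vector_space_fscale vee2_def tp_bilinear_simps fun_eq_iff algebra_simps)

lemma numeral_Bit0_nonzero:
  "(2::'a::field) \<noteq> 0 \<Longrightarrow> numeral n \<noteq> (0::'a) \<Longrightarrow> numeral (Num.Bit0 n) \<noteq> (0::'a)"
  by (metis mult_2 mult_eq_0_iff numeral_Bit0)

lemma wedge_tp_universal:
  fixes s1 :: "'f::field \<Rightarrow> 'v::ab_group_add \<Rightarrow> 'v" and s2 :: "'f \<Rightarrow> 'w::ab_group_add \<Rightarrow> 'w"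
    and \<gamma> :: "'v \<Rightarrow> 'w \<Rightarrow> 'v \<Rightarrow> 'w \<Rightarrow> 'x \<Rightarrow> 'f"
  assumes two: "(2::'f) \<noteq> 0"
    and vs1: "Vector_Spaces.vector_space s1" and vs2: "Vector_Spaces.vector_space s2"
    and l1: "\<And>x b y. Vector_Spaces.linear s1 fscale (\<lambda>a. \<gamma> a x b y)"
    and l2: "\<And>a b y. Vector_Spaces.linear s2 fscale (\<lambda>x. \<gamma> a x b y)"
    and l3: "\<And>a x y. Vector_Spaces.linear s1 fscale (\<lambda>b. \<gamma> a x b y)"
    and l4: "\<And>a x b. Vector_Spaces.linear s2 fscale (\<lambda>y. \<gamma> a x b y)"
    and anti: "\<And>a x b y. \<gamma> b y a x = - \<gamma> a x b y"
  shows "\<exists>L. Vector_Spaces.linear fscale fscale L \<and>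
     (\<forall>a b x y. L (wedge2 fscale (tp s1 s2 a x) (tp s1 s2 b y)) = \<gamma> a x b y)"
proof -
  obtain L where L: "Vector_Spaces.linear fscale fscale L"
    "\<And>a x b y. L (tp fscale fscale (tp s1 s2 a x) (tp s1 s2 b y)) = \<gamma> a x b y"
    using tp_tp_universal[OF vs1 vs2 vs1 vs2 vector_space_fscale l1 l2 l3 l4] by blast
  have "L (wedge2 fscale (tp s1 s2 a x) (tp s1 s2 b y)) = \<gamma> a x b y" for a x b y
    unfolding wedge2_def linear_map_scale[OF L(1)] linear_map_diff[OF L(1)] L(2) anti[of a x b y]
    using two by (simp add: fun_eq_iff field_simps)
  then show ?thesis using L(1) by blast
qed

lemma bdry_wedge3:
  fixes s :: "'f::field \<Rightarrow> 'v::ab_group_add \<Rightarrow> 'v"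
  assumes vs: "Vector_Spaces.vector_space s" and two: "(2::'f) \<noteq> 0"
    and b1: "\<And>v. Vector_Spaces.linear s s (\<lambda>u. b u v)" and b2: "\<And>u. Vector_Spaces.linear s s (b u)"
    and anti: "\<And>u v. u \<in> H \<Longrightarrow> v \<in> H \<Longrightarrow> b v u = - b u v"
  shows "Vector_Spaces.linear fscale fscale (bdry s b H) \<and>
    (\<forall>u\<in>H. \<forall>v\<in>H. \<forall>w\<in>H. bdry s b H (wedge3 s u v w) =
          wedge2 s (b u v) w + wedge2 s (b v w) u + wedge2 s (b w u) v)"
proof -
  let ?g = "\<lambda>u v w. fscale (1/2::'f) (wedge2 s (b u v) w)"
  obtain L where L: "Vector_Spaces.linear fscale fscale L" "\<And>u v w. L (tp3 s u v w) = ?g u v w"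
    using tp3_universal[OF vs vector_space_fscale,
        OF linear_compose_apply[OF linear_compose_apply[OF b1 linear_wedge2_left[OF vs]] linear_fscale]
           linear_compose_apply[OF linear_compose_apply[OF b2 linear_wedge2_left[OF vs]] linear_fscale]
           linear_compose_apply[OF linear_wedge2_right[OF vs] linear_fscale]]
    by blast
  have "L (wedge3 s u v w) = wedge2 s (b u v) w + wedge2 s (b v w) u + wedge2 s (b w u) v"
    if "u \<in> H" "v \<in> H" "w \<in> H" for u v w
  proof -
    have "L (wedge3 s u v w) = ?g u v w - ?g v u w + ?g v w u - ?g w v u + ?g w u v - ?g u w v"
      unfolding wedge3_def by (simp add: linear_map_add[OF L(1)] linear_map_diff[OF L(1)] L(2))
    also have "\<dots> = wedge2 s (b u v) w + wedge2 s (b v w) u + wedge2 s (b w u) v"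
      unfolding anti[OF that(1,2)] anti[OF that(2,3)] anti[OF that(3,1)] wedge2_neg_left
      using two numeral_Bit0_nonzero[OF two] by (simp add: fun_eq_iff field_simps)
    finally show ?thesis .
  qed
  then have "\<exists>D. Vector_Spaces.linear fscale fscale D \<and>
    (\<forall>u\<in>H. \<forall>v\<in>H. \<forall>w\<in>H. D (wedge3 s u v w) =
          wedge2 s (b u v) w + wedge2 s (b v w) u + wedge2 s (b w u) v)"
    using L(1) by blast
  then show ?thesis unfolding bdry_def by (rule someI_ex)
qed

section \<open>The current algebra\<close>

locale current_algebra =
  fixes sa :: "'f::field \<Rightarrow> 'a::comm_ring_1 \<Rightarrow> 'a"
    and sk :: "'f \<Rightarrow> 'k::ab_group_add \<Rightarrow> 'k"
    and br :: "'k \<Rightarrow> 'k \<Rightarrow> 'k"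
  assumes two: "(2::'f) \<noteq> 0"
    and vsA: "Vector_Spaces.vector_space sa"
    and algA: "\<And>c a b. sa c (a * b) = sa c a * b"
    and vsk: "Vector_Spaces.vector_space sk"
    and br_lin1: "\<And>y. Vector_Spaces.linear sk sk (\<lambda>x. br x y)"
    and br_lin2: "\<And>x. Vector_Spaces.linear sk sk (br x)"
    and br_alt: "\<And>x. br x x = 0"
begin

lemma numeral_Bit0_nonzero_field [simp]: "numeral n \<noteq> (0::'f) \<Longrightarrow> numeral (Num.Bit0 n) \<noteq> (0::'f)"
  by (rule numeral_Bit0_nonzero[OF two])

lemma linear_mult_left: "Vector_Spaces.linear sa sa (\<lambda>a. a * b)"
  by (rule linearI_additive_homogeneous[OF vsA vsA]) (simp_all add: algA distrib_right)

lemma linear_mult_right: "Vector_Spaces.linear sa sa (\<lambda>b. a * b)"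
  by (rule linearI_additive_homogeneous[OF vsA vsA])
     (simp_all add: distrib_left, metis algA mult.commute)

lemma br_anti: "br y x = - br x y"
proof -
  have "0 = br (x + y) (x + y)" by (simp add: br_alt)
  also have "\<dots> = br x x + br x y + (br y x + br y y)"
    using linear_map_add[OF br_lin1, of x y "x + y"] linear_map_add[OF br_lin2, of x x y]
      linear_map_add[OF br_lin2, of y x y]
    by simp
  finally show ?thesis by (simp add: br_alt add_eq_0_iff)
qed

abbreviation pure :: "'a \<Rightarrow> 'k \<Rightarrow> ('a, 'k, 'f) tens" where
  "pure a x \<equiv> tp sa sk a x"

abbreviation wedge_g :: "('a, 'k, 'f) tens \<Rightarrow> ('a, 'k, 'f) tens \<Rightarrow> (('a, 'k, 'f) tens, ('a, 'k, 'f) tens, 'f) tens"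
  where "wedge_g u v \<equiv> wedge2 fscale u v"

lemma gbr_spec:
  "(\<forall>u. Vector_Spaces.linear fscale fscale (gbr sa sk br u)) \<and>
   (\<forall>v. Vector_Spaces.linear fscale fscale (\<lambda>u. gbr sa sk br u v)) \<and>
   (\<forall>a x a' x'. gbr sa sk br (pure a x) (pure a' x') = pure (a * a') (br x x'))"
proof -
  obtain L where L: "Vector_Spaces.linear fscale fscale L"
    "\<forall>a x b y. L (tp fscale fscale (pure a x) (pure b y)) = pure (a * b) (br x y)"
    using tp_tp_universal[OF vsA vsk vsA vsk vector_space_fscale,
      OF linear_compose_apply[OF linear_mult_left linear_tp_left[OF vsA]]
         linear_compose_apply[OF br_lin1 linear_tp_right[OF vsk]]
         linear_compose_apply[OF linear_mult_right linear_tp_left[OF vsA]]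
         linear_compose_apply[OF br_lin2 linear_tp_right[OF vsk]]]
    by blast
  let ?B = "\<lambda>u v. L (tp fscale fscale u v)"
  have "\<exists>B. (\<forall>u. Vector_Spaces.linear fscale fscale (B u)) \<and>
   (\<forall>v. Vector_Spaces.linear fscale fscale (\<lambda>u. B u v)) \<and>
   (\<forall>a x a' x'. B (pure a x) (pure a' x') = pure (a * a') (br x x'))"
    by (rule exI[where x="?B"])
       (use linear_compose_apply[OF linear_tp_right[OF vector_space_fscale] L(1)]
          linear_compose_apply[OF linear_tp_left[OF vector_space_fscale] L(1)] L(2) in blast)
  then show ?thesis unfolding gbr_def by (rule someI_ex)
qed

lemma linear_gbr_right: "Vector_Spaces.linear fscale fscale (gbr sa sk br u)"
  using gbr_spec by blast

lemma linear_gbr_left: "Vector_Spaces.linear fscale fscale (\<lambda>u. gbr sa sk br u v)"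
  using gbr_spec by blast

lemma gbr_pure: "gbr sa sk br (pure a x) (pure a' x') = pure (a * a') (br x x')"
  using gbr_spec by blast

lemma gsp_eq: "gsp sa sk = fspan {pure a x | a x. True}"
  by (simp add: gsp_def tsp_def)

lemma pure_in_gsp: "pure a x \<in> gsp sa sk"
  unfolding gsp_eq by (rule fspan_base) blast

lemma gbr_anti: "u \<in> gsp sa sk \<Longrightarrow> v \<in> gsp sa sk \<Longrightarrow> gbr sa sk br v u = - gbr sa sk br u v"
proof -
  assume u: "u \<in> gsp sa sk" and v: "v \<in> gsp sa sk"
  have "gbr sa sk br v u + gbr sa sk br u v \<in> {0}"
  proof (rule bilinear_span_into_subspace[where f="\<lambda>u v. gbr sa sk br v u + gbr sa sk br u v",
        OF _ _ module.subspace_single_0[OF module_fscale]])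
    show "Vector_Spaces.linear fscale fscale (\<lambda>u. gbr sa sk br v u + gbr sa sk br u v)" for v
      by (rule linear_add_fun[OF linear_gbr_right linear_gbr_left])
    show "Vector_Spaces.linear fscale fscale (\<lambda>v. gbr sa sk br v u + gbr sa sk br u v)" for u
      by (rule linear_add_fun[OF linear_gbr_left linear_gbr_right])
    show "gbr sa sk br q p + gbr sa sk br p q \<in> {0}"
      if pq: "p \<in> {pure a x | a x. True}" "q \<in> {pure a x | a x. True}" for p q
    proof -
      obtain a x b y where "p = pure a x" "q = pure b y" using pq by blast
      then show ?thesis by (simp add: gbr_pure br_anti[of x y] tp_neg_right mult.commute)
    qed
  qed (use u v in \<open>simp_all add: gsp_eq fspan_def\<close>)
  then show ?thesis by (simp add: eq_neg_iff_add_eq_0)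
qed

abbreviation Dg where "Dg \<equiv> bdry fscale (gbr sa sk br) (gsp sa sk)"

lemma Dg_spec: "Vector_Spaces.linear fscale fscale Dg \<and>
    (\<forall>u\<in>gsp sa sk. \<forall>v\<in>gsp sa sk. \<forall>w\<in>gsp sa sk. Dg (wedge3 fscale u v w) =
          wedge_g (gbr sa sk br u v) w + wedge_g (gbr sa sk br v w) u + wedge_g (gbr sa sk br w u) v)"
  by (rule bdry_wedge3[OF vector_space_fscale two linear_gbr_left linear_gbr_right gbr_anti])

lemma linear_Dg: "Vector_Spaces.linear fscale fscale Dg"
  using Dg_spec by blast

lemma Dg_wedge3: "u \<in> gsp sa sk \<Longrightarrow> v \<in> gsp sa sk \<Longrightarrow> w \<in> gsp sa sk \<Longrightarrow>
   Dg (wedge3 fscale u v w) =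
     wedge_g (gbr sa sk br u v) w + wedge_g (gbr sa sk br v w) u + wedge_g (gbr sa sk br w u) v"
  using Dg_spec by blast

abbreviation Dk where "Dk \<equiv> bdry sk br UNIV"

lemma Dk_spec: "Vector_Spaces.linear fscale fscale Dk \<and>
    (\<forall>u\<in>UNIV. \<forall>v\<in>UNIV. \<forall>w\<in>UNIV. Dk (wedge3 sk u v w) =
          wedge2 sk (br u v) w + wedge2 sk (br v w) u + wedge2 sk (br w u) v)"
  by (rule bdry_wedge3[OF vsk two br_lin1 br_lin2 br_anti])

lemma linear_Dk: "Vector_Spaces.linear fscale fscale Dk"
  using Dk_spec by blast

lemma Dk_wedge3: "Dk (wedge3 sk u v w) = wedge2 sk (br u v) w + wedge2 sk (br v w) u + wedge2 sk (br w u) v"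
  using Dk_spec by blast

lemma p1_spec: "Vector_Spaces.linear fscale fscale (p1 sa sk) \<and>
     (\<forall>a b x y. p1 sa sk (wedge_g (pure a x) (pure b y)) = tp fscale fscale (wedge2 sa a b) (vee2 sk x y))"
proof -
  have anti: "tp fscale fscale (wedge2 sa b a) (vee2 sk y x) = - tp fscale fscale (wedge2 sa a b) (vee2 sk x y)"
    for a b x y by (simp add: wedge2_swap[of sa b a] vee2_swap[of sk y x] tp_neg_left)
  have "\<exists>L. Vector_Spaces.linear fscale fscale L \<and>
     (\<forall>a b x y. L (wedge_g (pure a x) (pure b y)) = tp fscale fscale (wedge2 sa a b) (vee2 sk x y))"
    by (rule wedge_tp_universal[OF two vsA vsk,
        OF linear_compose_apply[OF linear_wedge2_left[OF vsA] linear_tp_left[OF vector_space_fscale]]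
           linear_compose_apply[OF linear_vee2_left[OF vsk] linear_tp_right[OF vector_space_fscale]]
           linear_compose_apply[OF linear_wedge2_right[OF vsA] linear_tp_left[OF vector_space_fscale]]
           linear_compose_apply[OF linear_vee2_right[OF vsk] linear_tp_right[OF vector_space_fscale]]
           anti])
  then show ?thesis unfolding p1_def by (rule someI_ex)
qed

lemma p2_spec: "Vector_Spaces.linear fscale fscale (p2 sa sk) \<and>
     (\<forall>a b x y. p2 sa sk (wedge_g (pure a x) (pure b y)) = tp sa fscale (a * b) (wedge2 sk x y))"
proof -
  have anti: "tp sa fscale (b * a) (wedge2 sk y x) = - tp sa fscale (a * b) (wedge2 sk x y)" for a b x y
    by (simp add: mult.commute[of b a] wedge2_swap[of sk y x] tp_neg_right)
  have "\<exists>L. Vector_Spaces.linear fscale fscale L \<and>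
     (\<forall>a b x y. L (wedge_g (pure a x) (pure b y)) = tp sa fscale (a * b) (wedge2 sk x y))"
    by (rule wedge_tp_universal[OF two vsA vsk,
        OF linear_compose_apply[OF linear_mult_left linear_tp_left[OF vsA]]
           linear_compose_apply[OF linear_wedge2_left[OF vsk] linear_tp_right[OF vector_space_fscale]]
           linear_compose_apply[OF linear_mult_right linear_tp_left[OF vsA]]
           linear_compose_apply[OF linear_wedge2_right[OF vsk] linear_tp_right[OF vector_space_fscale]]
           anti])
  then show ?thesis unfolding p2_def by (rule someI_ex)
qed

abbreviation qA :: "'a \<Rightarrow> 'a \<Rightarrow> ('a, 'a, 'f) tens" where
  "qA a b \<equiv> vee2 sa a b - vee2 sa (a * b) 1"

lemma p3_spec: "Vector_Spaces.linear fscale fscale (p3 sa sk) \<and>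
     (\<forall>a b x y. p3 sa sk (wedge_g (pure a x) (pure b y)) = tp fscale fscale (qA a b) (wedge2 sk x y))"
proof -
  have anti: "tp fscale fscale (qA b a) (wedge2 sk y x) = - tp fscale fscale (qA a b) (wedge2 sk x y)"
    for a b x y by (simp add: mult.commute[of b a] vee2_swap[of sa b a] wedge2_swap[of sk y x] tp_neg_right)
  have "\<exists>L. Vector_Spaces.linear fscale fscale L \<and>
     (\<forall>a b x y. L (wedge_g (pure a x) (pure b y)) = tp fscale fscale (qA a b) (wedge2 sk x y))"
    by (rule wedge_tp_universal[OF two vsA vsk,
        OF linear_compose_apply[OF linear_diff_fun[OF linear_vee2_left[OF vsA]
               linear_compose_apply[OF linear_mult_left linear_vee2_left[OF vsA]]]
             linear_tp_left[OF vector_space_fscale]]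
           linear_compose_apply[OF linear_wedge2_left[OF vsk] linear_tp_right[OF vector_space_fscale]]
           linear_compose_apply[OF linear_diff_fun[OF linear_vee2_right[OF vsA]
               linear_compose_apply[OF linear_mult_right linear_vee2_left[OF vsA]]]
             linear_tp_left[OF vector_space_fscale]]
           linear_compose_apply[OF linear_wedge2_right[OF vsk] linear_tp_right[OF vector_space_fscale]]
           anti])
  then show ?thesis unfolding p3_def by (rule someI_ex)
qed

lemma linear_p1: "Vector_Spaces.linear fscale fscale (p1 sa sk)"
  using p1_spec by blast
lemma p1_pure: "p1 sa sk (wedge_g (pure a x) (pure b y)) = tp fscale fscale (wedge2 sa a b) (vee2 sk x y)"
  using p1_spec by blast

lemma linear_p2: "Vector_Spaces.linear fscale fscale (p2 sa sk)"
  using p2_spec by blast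
lemma p2_pure: "p2 sa sk (wedge_g (pure a x) (pure b y)) = tp sa fscale (a * b) (wedge2 sk x y)"
  using p2_spec by blast

lemma linear_p3: "Vector_Spaces.linear fscale fscale (p3 sa sk)"
  using p3_spec by blast
lemma p3_pure: "p3 sa sk (wedge_g (pure a x) (pure b y)) = tp fscale fscale (qA a b) (wedge2 sk x y)"
  using p3_spec by blast

lemma multA_spec: "Vector_Spaces.linear fscale sa (multA sa) \<and> (\<forall>a b. multA sa (tp sa sa a b) = a * b)"
proof -
  have "\<exists>L. Vector_Spaces.linear fscale sa L \<and> (\<forall>a b. L (tp sa sa a b) = a * b)"
    by (rule tp_universal[OF vsA vsA vsA linear_mult_left linear_mult_right])
  then show ?thesis unfolding multA_def by (rule someI_ex)
qed

lemma linear_multA: "Vector_Spaces.linear fscale sa (multA sa)"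
  using multA_spec by blast

lemma multA_vee2: "multA sa (vee2 sa a b) = a * b"
proof -
  interpret vA: vector_space sa by (rule vsA)
  have "multA sa (vee2 sa a b) = sa (1/2) (a * b + a * b)"
    using multA_spec
    by (simp add: vee2_def linear_map_scale[OF linear_multA] linear_map_add[OF linear_multA] mult.commute)
  also have "a * b + a * b = sa 2 (a * b)" using vA.scale_left_distrib[of 1 1 "a * b"] by simp
  also have "sa (1/2) (sa 2 (a * b)) = a * b" using two by simp
  finally show ?thesis .
qed

definition emb1_elt :: "'a \<Rightarrow> 'a \<Rightarrow> 'k \<Rightarrow> 'k \<Rightarrow> (('a, 'k, 'f) tens, ('a, 'k, 'f) tens, 'f) tens" where
  "emb1_elt a b x y = fscale (1/2) (wedge_g (pure a x) (pure b y) + wedge_g (pure a y) (pure b x))"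

definition emb3_elt :: "'a \<Rightarrow> 'a \<Rightarrow> 'k \<Rightarrow> 'k \<Rightarrow> (('a, 'k, 'f) tens, ('a, 'k, 'f) tens, 'f) tens" where
  "emb3_elt a b x y = fscale (1/2) (wedge_g (pure a x) (pure b y) - wedge_g (pure a y) (pure b x))"

lemma emb_spec:
  "(Vector_Spaces.linear fscale fscale (emb1 sa sk) \<and>
     (\<forall>a b x y. emb1 sa sk (tp fscale fscale (wedge2 sa a b) (vee2 sk x y)) = emb1_elt a b x y)) \<and>
   (Vector_Spaces.linear fscale fscale (emb3 sa sk) \<and>
     (\<forall>a b x y. emb3 sa sk (tp fscale fscale (vee2 sa a b) (wedge2 sk x y)) = emb3_elt a b x y))"
proof -
  obtain L where L: "Vector_Spaces.linear fscale fscale L"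
    "\<And>a b x y. L (tp fscale fscale (tp sa sa a b) (tp sk sk x y)) = wedge_g (pure a x) (pure b y)"
    using tp_tp_universal[OF vsA vsA vsk vsk vector_space_fscale,
      OF linear_compose_apply[OF linear_tp_left[OF vsA] linear_wedge2_left[OF vector_space_fscale]]
         linear_compose_apply[OF linear_tp_left[OF vsA] linear_wedge2_right[OF vector_space_fscale]]
         linear_compose_apply[OF linear_tp_right[OF vsk] linear_wedge2_left[OF vector_space_fscale]]
         linear_compose_apply[OF linear_tp_right[OF vsk] linear_wedge2_right[OF vector_space_fscale]]]
    by blast
  have e1: "L (tp fscale fscale (wedge2 sa a b) (vee2 sk x y)) = emb1_elt a b x y" for a b x y
    by (simp add: emb1_elt_def wedge2_def vee2_def tp_bilinear_simps linear_map_add[OF L(1)]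
        linear_map_diff[OF L(1)] linear_map_scale[OF L(1)] L(2) fun_eq_iff field_simps)
  have e3: "L (tp fscale fscale (vee2 sa a b) (wedge2 sk x y)) = emb3_elt a b x y" for a b x y
    by (simp add: emb3_elt_def wedge2_def vee2_def tp_bilinear_simps linear_map_add[OF L(1)]
        linear_map_diff[OF L(1)] linear_map_scale[OF L(1)] L(2) fun_eq_iff field_simps)
  have "\<exists>L. Vector_Spaces.linear fscale fscale L \<and>
     (\<forall>a b x y. L (tp fscale fscale (wedge2 sa a b) (vee2 sk x y)) = emb1_elt a b x y)"
    using L(1) e1 by blast
  then have "Vector_Spaces.linear fscale fscale (emb1 sa sk) \<and>
     (\<forall>a b x y. emb1 sa sk (tp fscale fscale (wedge2 sa a b) (vee2 sk x y)) = emb1_elt a b x y)"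
    unfolding emb1_def emb1_elt_def by (rule someI_ex)
  moreover have "\<exists>L. Vector_Spaces.linear fscale fscale L \<and>
     (\<forall>a b x y. L (tp fscale fscale (vee2 sa a b) (wedge2 sk x y)) = emb3_elt a b x y)"
    using L(1) e3 by blast
  then have "Vector_Spaces.linear fscale fscale (emb3 sa sk) \<and>
     (\<forall>a b x y. emb3 sa sk (tp fscale fscale (vee2 sa a b) (wedge2 sk x y)) = emb3_elt a b x y)"
    unfolding emb3_def emb3_elt_def by (rule someI_ex)
  ultimately show ?thesis by blast
qed

lemma linear_emb1: "Vector_Spaces.linear fscale fscale (emb1 sa sk)"
  using emb_spec by blast
lemma emb1_pure: "emb1 sa sk (tp fscale fscale (wedge2 sa a b) (vee2 sk x y)) = emb1_elt a b x y"
  using emb_spec by blast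

lemma linear_emb3: "Vector_Spaces.linear fscale fscale (emb3 sa sk)"
  using emb_spec by blast
lemma emb3_pure: "emb3 sa sk (tp fscale fscale (vee2 sa a b) (wedge2 sk x y)) = emb3_elt a b x y"
  using emb_spec by blast

definition emb3_IA_elt :: "'a \<Rightarrow> 'a \<Rightarrow> 'k \<Rightarrow> 'k \<Rightarrow> (('a, 'k, 'f) tens, ('a, 'k, 'f) tens, 'f) tens" where
  "emb3_IA_elt a b x y = emb3_elt a b x y - emb3_elt (a * b) 1 x y"

definition emb1_kS2_elt :: "'a \<Rightarrow> 'a \<Rightarrow> 'k \<Rightarrow> 'k \<Rightarrow> 'k \<Rightarrow> (('a, 'k, 'f) tens, ('a, 'k, 'f) tens, 'f) tens"
  where "emb1_kS2_elt a b x y z = emb1_elt a b (br z x) y + emb1_elt a b x (br z y)"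

definition bdry_elt :: "'a \<Rightarrow> 'k \<Rightarrow> 'a \<Rightarrow> 'k \<Rightarrow> 'a \<Rightarrow> 'k \<Rightarrow> (('a, 'k, 'f) tens, ('a, 'k, 'f) tens, 'f) tens"
  where "bdry_elt a x b y c z = wedge_g (pure (a * b) (br x y)) (pure c z)
    + wedge_g (pure (b * c) (br y z)) (pure a x) + wedge_g (pure (c * a) (br z x)) (pure b y)"

lemmas expand_elts = emb1_elt_def emb3_elt_def emb3_IA_elt_def emb1_kS2_elt_def bdry_elt_def
  wedge2_def vee2_def tp_bilinear_simps fun_eq_iff

lemma emb1_kS2_elt_eq: "emb1_kS2_elt a b x y z = fscale (1/2) (bdry_elt 1 z a x b y + bdry_elt 1 z a y b x)"
  by (simp add: expand_elts br_anti[of z y] br_anti[of z x] br_anti[of x y] field_simps mult_ac)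

lemma emb3_IA_pair_eq:
  "emb3_IA_elt a b (br y z) x + emb3_IA_elt a b (br z x) y =
   bdry_elt a x b y 1 z - bdry_elt (a * b) x 1 y 1 z - emb1_kS2_elt b a z x y + emb1_kS2_elt a b y z x
   - emb1_kS2_elt (a * b) 1 z x y - emb1_kS2_elt (a * b) 1 y z x"
  by (simp add: expand_elts br_anti[of z y] br_anti[of z x] br_anti[of x y] field_simps mult_ac)

lemma emb1_T0_eq:
  "emb1_elt (a * b) c x (br y z) + emb1_elt (b * c) a x (br y z) + emb1_elt (c * a) b x (br y z)
     - emb1_elt (a * b * c) 1 x (br y z)
   = bdry_elt a y b z c x - bdry_elt (a * b * c) y 1 z 1 x
     - (emb1_kS2_elt (b * c) a x y z - emb1_kS2_elt (c * a) b z x y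
        + emb1_kS2_elt (a * b * c) 1 x y z + emb1_kS2_elt (a * b * c) 1 z x y)
     - (emb3_IA_elt (a * b) c (br y z) x + emb3_IA_elt (b * c) a (br z x) y
        + emb3_IA_elt (c * a) b (br x y) z)"
  using [[simp_depth_limit=1000]]
  by (simp add: expand_elts br_anti[of z y] br_anti[of z x] br_anti[of x y] field_simps mult_ac)

text \<open>The pair relation above, summed cyclically in \<open>x, y, z\<close>, isolates a single term.\<close>

lemma emb3_IA_elt_br_eq:
  "emb3_IA_elt a b x (br y z) = fscale (- 1/2) (
     (emb3_IA_elt a b (br y z) x + emb3_IA_elt a b (br z x) y)
   + (emb3_IA_elt a b (br x y) z + emb3_IA_elt a b (br y z) x)
   - (emb3_IA_elt a b (br z x) y + emb3_IA_elt a b (br x y) z))"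
  by (simp add: expand_elts field_simps)

lemma emb3_IA_elt_swap: "emb3_IA_elt a b (br y z) x = - emb3_IA_elt a b x (br y z)"
  by (simp add: expand_elts field_simps)

abbreviation B2G where "B2G \<equiv> B2g sa sk br"

lemma B2G_eq: "B2G = Dg ` Lam3 fscale (gsp sa sk)"
  by (simp add: B2g_def B2_def)

lemma subspace_B2G: "fsub B2G"
  unfolding B2G_eq Lam3_def fspan_def
  by (rule subspace_linear_image[OF linear_Dg module.subspace_span[OF module_fscale]])

lemma bdry_elt_in_B2G: "bdry_elt a x b y c z \<in> B2G"
proof -
  have "Dg (wedge3 fscale (pure a x) (pure b y) (pure c z)) = bdry_elt a x b y c z"
    by (simp add: Dg_wedge3 pure_in_gsp gbr_pure bdry_elt_def)
  moreover have "wedge3 fscale (pure a x) (pure b y) (pure c z) \<in> Lam3 fscale (gsp sa sk)"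
    unfolding Lam3_def by (rule fspan_base) (use pure_in_gsp in blast)
  ultimately show ?thesis unfolding B2G_eq by (metis image_eqI)
qed

lemma emb1_kS2_elt_in_B2G: "emb1_kS2_elt a b x y z \<in> B2G"
  unfolding emb1_kS2_elt_eq by (intro fsub_scale[OF subspace_B2G] fsub_add[OF subspace_B2G] bdry_elt_in_B2G)

lemma emb3_IA_pair_in_B2G: "emb3_IA_elt a b (br y z) x + emb3_IA_elt a b (br z x) y \<in> B2G"
  unfolding emb3_IA_pair_eq
  by (intro fsub_add[OF subspace_B2G] fsub_diff[OF subspace_B2G] bdry_elt_in_B2G emb1_kS2_elt_in_B2G)

lemma emb3_IA_elt_br_in_B2G: "emb3_IA_elt a b x (br y z) \<in> B2G"
  unfolding emb3_IA_elt_br_eq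
  by (intro fsub_scale[OF subspace_B2G] fsub_add[OF subspace_B2G] fsub_diff[OF subspace_B2G]
      emb3_IA_pair_in_B2G)

lemma emb1_T0_in_B2G:
  "emb1_elt (a * b) c x (br y z) + emb1_elt (b * c) a x (br y z) + emb1_elt (c * a) b x (br y z)
     - emb1_elt (a * b * c) 1 x (br y z) \<in> B2G"
  unfolding emb1_T0_eq emb3_IA_elt_swap
  by (intro fsub_add[OF subspace_B2G] fsub_diff[OF subspace_B2G] fsub_neg[OF subspace_B2G]
      bdry_elt_in_B2G emb1_kS2_elt_in_B2G emb3_IA_elt_br_in_B2G)

lemma linear_image_B2G_subset:
  assumes P: "Vector_Spaces.linear fscale fscale P" and S: "fsub S"
    and gen: "\<And>a x b y c z. P (bdry_elt a x b y c z) \<in> S"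
  shows "P ` B2G \<subseteq> S"
proof -
  let ?f = "\<lambda>u v w. P (wedge_g (gbr sa sk br u v) w + wedge_g (gbr sa sk br v w) u
                        + wedge_g (gbr sa sk br w u) v)"
  note wl = linear_wedge2_left[OF vector_space_fscale] and wr = linear_wedge2_right[OF vector_space_fscale]
  have l1: "Vector_Spaces.linear fscale fscale (\<lambda>u. ?f u v w)" for v w
    by (rule linear_compose_apply[OF linear_add_fun[OF linear_add_fun[OF
          linear_compose_apply[OF linear_gbr_left wl] wr] linear_compose_apply[OF linear_gbr_right wl]] P])
  have l2: "Vector_Spaces.linear fscale fscale (\<lambda>v. ?f u v w)" for u w
    by (rule linear_compose_apply[OF linear_add_fun[OF linear_add_fun[OF
          linear_compose_apply[OF linear_gbr_right wl] linear_compose_apply[OF linear_gbr_left wl]] wr] P])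
  have l3: "Vector_Spaces.linear fscale fscale (\<lambda>w. ?f u v w)" for u v
    by (rule linear_compose_apply[OF linear_add_fun[OF linear_add_fun[OF
          wr linear_compose_apply[OF linear_gbr_right wl]] linear_compose_apply[OF linear_gbr_left wl]] P])
  have "?f u v w \<in> S" if "u \<in> gsp sa sk" "v \<in> gsp sa sk" "w \<in> gsp sa sk" for u v w
  proof (rule trilinear_span_into_subspace[where f="?f", OF l1 l2 l3 S])
    show "?f p q r \<in> S"
      if "p \<in> {pure a x | a x. True}" "q \<in> {pure a x | a x. True}" "r \<in> {pure a x | a x. True}" for p q r
      using that gen by (auto simp: gbr_pure bdry_elt_def)
  qed (use that in \<open>simp_all add: gsp_eq fspan_def\<close>)
  then have "P (Dg t) \<in> S" if "t \<in> {wedge3 fscale u v w | u v w. u \<in> gsp sa sk \<and> v \<in> gsp sa sk \<and> w \<in> gsp sa sk}"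
    for t using that Dg_wedge3 by auto
  then have "Lam3 fscale (gsp sa sk) \<subseteq> {t. P (Dg t) \<in> S}"
    unfolding Lam3_def
    by (intro fspan_subset[OF subspace_linear_vimage[OF linear_compose_apply[OF linear_Dg P] S]]) blast
  then show ?thesis unfolding B2G_eq by blast
qed

lemma fspan_kder_subset:
  assumes f: "\<And>x. Vector_Spaces.linear sk fscale (f x)"
  shows "fspan {f x y | x y. y \<in> kder sk br} \<subseteq> fspan {f x (br y z) | x y z. True}"
proof (rule fspan_subset[OF fsub_fspan], safe)
  fix x y assume "y \<in> kder sk br"
  then have "f x y \<in> fspan (f x ` {br y z | y z. True})"
    using linear_image_span[OF f, of x "{br y z | y z. True}"] by (auto simp: kder_def fspan_def)
  also have "\<dots> \<subseteq> fspan {f x (br y z) | x y z. True}" by (rule fspan_mono) blast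
  finally show "f x y \<in> fspan {f x (br y z) | x y z. True}" .
qed

lemma br_in_kder: "br x y \<in> kder sk br"
  unfolding kder_def by (rule module.span_base[OF vsk[unfolded module_iff_vector_space[symmetric]]]) blast

abbreviation kS2_gen :: "'k \<Rightarrow> 'k \<Rightarrow> 'k \<Rightarrow> ('k, 'k, 'f) tens" where
  "kS2_gen x y z \<equiv> vee2 sk (br z x) y + vee2 sk x (br z y)"

abbreviation TA_gen :: "'a \<Rightarrow> 'a \<Rightarrow> 'a \<Rightarrow> ('a, 'a, 'f) tens" where
  "TA_gen a b c \<equiv> wedge2 sa (a * b) c + wedge2 sa (b * c) a + wedge2 sa (c * a) b"

abbreviation T0A_gen :: "'a \<Rightarrow> 'a \<Rightarrow> 'a \<Rightarrow> ('a, 'a, 'f) tens" where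
  "T0A_gen a b c \<equiv> TA_gen a b c - wedge2 sa (a * b * c) 1"

lemma emb1_image_subset_B2G:
  "emb1 sa sk ` ssum (tsp fscale fscale (Lam2 sa UNIV) (kS2 sk br))
                     (tsp fscale fscale (T0A sa) (kveek' sk br)) \<subseteq> B2G"
proof -
  let ?S = "{t. emb1 sa sk t \<in> B2G}"
  have S: "fsub ?S" by (rule subspace_linear_vimage[OF linear_emb1 subspace_B2G])
  have "tsp fscale fscale (Lam2 sa UNIV) (kS2 sk br) \<subseteq> ?S"
    by (rule tsp_subset_subspace[OF vector_space_fscale vector_space_fscale S,
          of _ "{wedge2 sa a b | a b. True}" _ "{kS2_gen x y z | x y z. True}"])
       (auto simp: Lam2_def kS2_def fspan_def tp_add_right linear_map_add[OF linear_emb1] emb1_pure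
         emb1_kS2_elt_in_B2G[unfolded emb1_kS2_elt_def])
  moreover have "tsp fscale fscale (T0A sa) (kveek' sk br) \<subseteq> ?S"
    by (rule tsp_subset_subspace[OF vector_space_fscale vector_space_fscale S,
          of _ "{T0A_gen a b c | a b c. True}" _ "{vee2 sk x (br y z) | x y z. True}"])
       (use fspan_kder_subset[of "vee2 sk", OF linear_vee2_right[OF vsk]] in
         \<open>auto simp: T0A_def kveek'_def fspan_def tp_add_left tp_diff_left linear_map_add[OF linear_emb1]
           linear_map_diff[OF linear_emb1] emb1_pure emb1_T0_in_B2G\<close>)
  ultimately show ?thesis using ssum_subset[OF S] by blast
qed

lemma p1_bdry_elt: "p1 sa sk (bdry_elt a x b y c z) =
   (tp fscale fscale (wedge2 sa (b * c) a) (kS2_gen z x y) - tp fscale fscale (wedge2 sa (c * a) b) (kS2_gen y z x))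
   + tp fscale fscale (TA_gen a b c) (vee2 sk z (br x y))"
  unfolding bdry_elt_def linear_map_add[OF linear_p1] p1_pure
  by (simp add: expand_elts br_anti[of x y] br_anti[of z x] field_simps mult_ac)

lemma p1_emb1_elt: "p1 sa sk (emb1_elt a b x y) = tp fscale fscale (wedge2 sa a b) (vee2 sk x y)"
  unfolding emb1_elt_def linear_map_scale[OF linear_p1] linear_map_add[OF linear_p1] p1_pure
    vee2_swap[of sk y x]
  by (simp add: fun_eq_iff field_simps)

lemma p1_emb1_kS2_elt:
  "p1 sa sk (emb1_kS2_elt a b x y z) = tp fscale fscale (wedge2 sa a b) (kS2_gen x y z)"
  unfolding emb1_kS2_elt_def linear_map_add[OF linear_p1] p1_emb1_elt tp_add_right ..

lemma p1_TA_gen: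
  "tp fscale fscale (TA_gen a b c) (vee2 sk x (br y z))
   = p1 sa sk ((emb1_elt (a * b) c x (br y z) + emb1_elt (b * c) a x (br y z) + emb1_elt (c * a) b x (br y z)
                - emb1_elt (a * b * c) 1 x (br y z))
               + bdry_elt (a * b * c) y 1 z 1 x + emb1_kS2_elt (a * b * c) 1 x y z
               + emb1_kS2_elt (a * b * c) 1 z x y)"
  unfolding linear_map_add[OF linear_p1] linear_map_diff[OF linear_p1] p1_emb1_elt p1_emb1_kS2_elt
    bdry_elt_def p1_pure
  by (simp add: expand_elts br_anti[of z y] br_anti[of z x] br_anti[of x y] field_simps mult_ac)

lemma p1_image_B2G:
  "p1 sa sk ` B2G = ssum (tsp fscale fscale (Lam2 sa UNIV) (kS2 sk br))
                         (tsp fscale fscale (TA sa) (kveek' sk br))"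
proof
  have "wedge2 sa u v \<in> Lam2 sa UNIV" for u v
    unfolding Lam2_def by (rule fspan_base) blast
  moreover have "kS2_gen x y z \<in> kS2 sk br" for x y z
    unfolding kS2_def by (rule fspan_base) blast
  moreover have "TA_gen a b c \<in> TA sa" for a b c
    unfolding TA_def by (rule fspan_base) blast
  moreover have "vee2 sk z (br x y) \<in> kveek' sk br" for x y z
    unfolding kveek'_def by (rule fspan_base) (use br_in_kder in blast)
  ultimately show "p1 sa sk ` B2G \<subseteq> ssum (tsp fscale fscale (Lam2 sa UNIV) (kS2 sk br))
                                          (tsp fscale fscale (TA sa) (kveek' sk br))"
    by (intro linear_image_B2G_subset[OF linear_p1 fsub_ssum[OF fsub_tsp fsub_tsp]])
       (simp only: p1_bdry_elt, intro ssum_memI fsub_diff[OF fsub_tsp] tp_base)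
next
  have S: "fsub (p1 sa sk ` B2G)" by (rule subspace_linear_image[OF linear_p1 subspace_B2G])
  have "tsp fscale fscale (Lam2 sa UNIV) (kS2 sk br) \<subseteq> p1 sa sk ` B2G"
    by (rule tsp_subset_subspace[OF vector_space_fscale vector_space_fscale S,
          of _ "{wedge2 sa a b | a b. True}" _ "{kS2_gen x y z | x y z. True}"])
       (auto simp: Lam2_def kS2_def fspan_def p1_emb1_kS2_elt[symmetric] intro: imageI emb1_kS2_elt_in_B2G)
  moreover have "tsp fscale fscale (TA sa) (kveek' sk br) \<subseteq> p1 sa sk ` B2G"
    by (rule tsp_subset_subspace[OF vector_space_fscale vector_space_fscale S,
          of _ "{TA_gen a b c | a b c. True}"
          _ "{vee2 sk x (br y z) | x y z. True}"])
       (use fspan_kder_subset[of "vee2 sk", OF linear_vee2_right[OF vsk]] in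
         \<open>auto simp: TA_def kveek'_def fspan_def p1_TA_gen
           intro!: imageI fsub_add[OF subspace_B2G] emb1_T0_in_B2G bdry_elt_in_B2G emb1_kS2_elt_in_B2G\<close>)
  ultimately show "ssum (tsp fscale fscale (Lam2 sa UNIV) (kS2 sk br))
                        (tsp fscale fscale (TA sa) (kveek' sk br)) \<subseteq> p1 sa sk ` B2G"
    by (rule ssum_subset[OF S])
qed

lemma p2_bdry_elt: "p2 sa sk (bdry_elt a x b y c z) = tp sa fscale (a * b * c) (Dk (wedge3 sk x y z))"
  unfolding bdry_elt_def linear_map_add[OF linear_p2] p2_pure Dk_wedge3 tp_add_right by (simp add: mult_ac)

lemma p2_image_B2G: "p2 sa sk ` B2G = tsp sa fscale UNIV (B2 sk br UNIV)"
proof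
  have "Dk (wedge3 sk x y z) \<in> B2 sk br UNIV" for x y z
    unfolding B2_def Lam3_def by (rule imageI, rule fspan_base) blast
  then show "p2 sa sk ` B2G \<subseteq> tsp sa fscale UNIV (B2 sk br UNIV)"
    by (intro linear_image_B2G_subset[OF linear_p2 fsub_tsp]) (simp add: p2_bdry_elt tp_base)
next
  have "B2 sk br UNIV \<subseteq> module.span fscale (Dk ` {wedge3 sk x y z | x y z. True})"
    by (simp add: B2_def Lam3_def fspan_def linear_image_span[OF linear_Dk])
  moreover have "tp sa fscale a (Dk (wedge3 sk x y z)) \<in> p2 sa sk ` B2G" for a x y z
    using p2_bdry_elt[of a x 1 y 1 z] bdry_elt_in_B2G by (metis image_eqI mult_1_right)
  ultimately show "tsp sa fscale UNIV (B2 sk br UNIV) \<subseteq> p2 sa sk ` B2G"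
    by (intro tsp_subset_subspace[OF vsA vector_space_fscale
          subspace_linear_image[OF linear_p2 subspace_B2G], of _ UNIV])
       (auto simp: module.span_superset[OF vsA[unfolded module_iff_vector_space[symmetric]]])
qed

lemma qA_in_IA: "qA a b \<in> IA sa"
proof -
  have "qA a b \<in> Sym2 sa UNIV"
    unfolding Sym2_def by (intro fsub_diff[OF fsub_fspan] fspan_base) blast+
  moreover have "multA sa (qA a b) = 0"
    unfolding linear_map_diff[OF linear_multA] multA_vee2 by simp
  ultimately show ?thesis unfolding IA_def by blast
qed

text \<open>An element \<open>t\<close> of \<open>I\<^sub>A\<close> equals \<open>t - m(t) \<or> 1\<close>, which is linear in \<open>t\<close> and
  maps each \<open>a \<or> b\<close> to \<open>qA a b\<close>.\<close>

lemma IA_subset: "IA sa \<subseteq> fspan {qA a b | a b. True}"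
proof
  fix t assume t: "t \<in> IA sa"
  let ?F = "\<lambda>t. t - vee2 sa (multA sa t) 1"
  have F: "Vector_Spaces.linear fscale fscale ?F"
    by (rule linear_diff_fun[OF vector_space.linear_ident[OF vector_space_fscale]
          linear_compose_apply[OF linear_multA linear_vee2_left[OF vsA]]])
  have "?F (vee2 sa u v) \<in> fspan {qA a b | a b. True}" for u v
    unfolding multA_vee2 by (rule fspan_base) blast
  then have "Sym2 sa UNIV \<subseteq> {t. ?F t \<in> fspan {qA a b | a b. True}}"
    unfolding Sym2_def by (intro fspan_subset[OF subspace_linear_vimage[OF F fsub_fspan]]) blast
  then show "t \<in> fspan {qA a b | a b. True}" using t by (auto simp: IA_def vee2_zero_left)
qed

lemma kwedgek'_subset: "kwedgek' sk br \<subseteq> fspan {wedge2 sk x (br y z) | x y z. True}"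
  unfolding kwedgek'_def by (rule fspan_kder_subset[of "wedge2 sk", OF linear_wedge2_right[OF vsk]])

lemma qA_wedge_br_in_tsp: "tp fscale fscale (qA a b) (wedge2 sk (br y z) x) \<in> tsp fscale fscale (IA sa) (kwedgek' sk br)"
proof -
  have "wedge2 sk x (br y z) \<in> kwedgek' sk br"
    unfolding kwedgek'_def by (rule fspan_base) (use br_in_kder in blast)
  then show ?thesis unfolding wedge2_swap[of sk "br y z" x] tp_neg_right
    by (intro fsub_neg[OF fsub_tsp] tp_base qA_in_IA)
qed

lemma p3_emb3_IA_elt: "p3 sa sk (emb3_IA_elt a b x y) = tp fscale fscale (qA a b) (wedge2 sk x y)"
  unfolding emb3_IA_elt_def emb3_elt_def linear_map_diff[OF linear_p3] linear_map_scale[OF linear_p3] p3_pure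
  by (simp add: wedge2_def vee2_def tp_bilinear_simps fun_eq_iff field_simps mult_ac)

lemma p3_image_B2G: "p3 sa sk ` B2G = tsp fscale fscale (IA sa) (kwedgek' sk br)"
proof
  show "p3 sa sk ` B2G \<subseteq> tsp fscale fscale (IA sa) (kwedgek' sk br)"
    by (rule linear_image_B2G_subset[OF linear_p3 fsub_tsp])
       (unfold bdry_elt_def linear_map_add[OF linear_p3] p3_pure,
        intro fsub_add[OF fsub_tsp] qA_wedge_br_in_tsp)
  show "tsp fscale fscale (IA sa) (kwedgek' sk br) \<subseteq> p3 sa sk ` B2G"
    by (rule tsp_subset_subspace[OF vector_space_fscale vector_space_fscale
          subspace_linear_image[OF linear_p3 subspace_B2G] _ _, of _ "{qA a b | a b. True}" _
          "{wedge2 sk x (br y z) | x y z. True}"])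
       (use IA_subset kwedgek'_subset in
         \<open>auto simp: fspan_def p3_emb3_IA_elt[symmetric] intro: imageI emb3_IA_elt_br_in_B2G\<close>)
qed

lemma emb3_image_subset_B2G: "emb3 sa sk ` tsp fscale fscale (IA sa) (kwedgek' sk br) \<subseteq> B2G"
proof -
  have "tsp fscale fscale (IA sa) (kwedgek' sk br) \<subseteq> {t. emb3 sa sk t \<in> B2G}"
    by (rule tsp_subset_subspace[OF vector_space_fscale vector_space_fscale
          subspace_linear_vimage[OF linear_emb3 subspace_B2G], of _ "{qA a b | a b. True}" _
          "{wedge2 sk x (br y z) | x y z. True}"])
       (use IA_subset kwedgek'_subset in
         \<open>auto simp: fspan_def tp_diff_left linear_map_diff[OF linear_emb3] emb3_pure
           emb3_IA_elt_br_in_B2G[unfolded emb3_IA_elt_def]\<close>)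
  then show ?thesis by blast
qed

end

theorem lemma2p3:
  fixes sa :: "'f::field \<Rightarrow> 'a::comm_ring_1 \<Rightarrow> 'a"
    and sk :: "'f \<Rightarrow> 'k::ab_group_add \<Rightarrow> 'k"
    and br :: "'k \<Rightarrow> 'k \<Rightarrow> 'k"
  assumes two: "(2::'f) \<noteq> 0"
    and vsA: "Vector_Spaces.vector_space sa"
    and algA: "\<And>c a b. sa c (a * b) = sa c a * b"
    and vsk: "Vector_Spaces.vector_space sk"
    and br_lin1: "\<And>y. Vector_Spaces.linear sk sk (\<lambda>x. br x y)"
    and br_lin2: "\<And>x. Vector_Spaces.linear sk sk (br x)"
    and br_alt: "\<And>x. br x x = 0"
    and jacobi: "\<And>x y z. br x (br y z) + br y (br z x) + br z (br x y) = 0"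
  shows
    "emb1 sa sk ` ssum (tsp fscale fscale (Lam2 sa UNIV) (kS2 sk br))
                       (tsp fscale fscale (T0A sa) (kveek' sk br))
        \<subseteq> B2g sa sk br
     \<and> p1 sa sk ` B2g sa sk br
        = ssum (tsp fscale fscale (Lam2 sa UNIV) (kS2 sk br))
               (tsp fscale fscale (TA sa) (kveek' sk br))
     \<and> p2 sa sk ` B2g sa sk br = tsp sa fscale UNIV (B2 sk br UNIV)
     \<and> tsp fscale fscale (IA sa) (kwedgek' sk br) = p3 sa sk ` B2g sa sk br
     \<and> emb3 sa sk ` tsp fscale fscale (IA sa) (kwedgek' sk br) \<subseteq> B2g sa sk br"
proof -
  interpret current_algebra sa sk br
    by (rule current_algebra.intro) (fact two vsA algA vsk br_lin1 br_lin2 br_alt)+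
  show ?thesis
    using emb1_image_subset_B2G p1_image_B2G p2_image_B2G p3_image_B2G emb3_image_subset_B2G
    by simp
qed

end
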